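(* The functions \[ \Phi(x)=x\,\frac{\mathrm{Ai}'(a_1+x)}{\mathrm{Ai}(a_1+x)}\qquad\text{and}\qquad \Psi(x)=\frac{\mathrm{Ai}'(a_1+x)}{\mathrm{Ai}(a_1+x)} \] are infinitely differentiable and monotonically decreasing on $x>0$, and $\Phi(0)=1$ (i.e. $\lim_{x\to0^+}\Phi(x)=1$).
   Context: $\mathrm{Ai}$ is the Airy function, the solution of $\mathrm{Ai}''(x)=x\,\mathrm{Ai}(x)$ with $\mathrm{Ai}(x)\to0$ as $x\to+\infty$; its zeros are all real and negative, and $a_1\approx-2.338$ is its largest zero. *)

theory Defs
  imports "HOL-Analysis.Analysis"
begin

text \<open>The Airy function Ai, via its standard Maclaurin expansion (DLMF 9.4.1-9.4.3):
  Ai(x) = Ai(0) f(x) + Ai'(0) g(x), where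
  f(x) = sum_k 3^k (1/3)_k x^(3k) / (3k)!,  g(x) = sum_k 3^k (2/3)_k x^(3k+1) / (3k+1)!,
  Ai(0) = 1 / (3^(2/3) Gamma(2/3)),  Ai'(0) = -1 / (3^(1/3) Gamma(1/3)).
  This is the unique solution of y'' = x y decaying at +infinity with the standard normalisation.\<close>

definition airy_f :: "real \<Rightarrow> real" where
  "airy_f x = (\<Sum>k. 3 ^ k * pochhammer (1/3) k * x ^ (3*k) / fact (3*k))"

definition airy_g :: "real \<Rightarrow> real" where
  "airy_g x = (\<Sum>k. 3 ^ k * pochhammer (2/3) k * x ^ (3*k+1) / fact (3*k+1))"

definition Airy_Ai :: "real \<Rightarrow> real" where
  "Airy_Ai x = airy_f x / (3 powr (2/3) * Gamma (2/3))
             - airy_g x / (3 powr (1/3) * Gamma (1/3))"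

text \<open>The largest zero a_1 of Ai (all zeros are real and negative; a_1 is about -2.338).\<close>
definition airy_a1 :: real where
  "airy_a1 = (GREATEST x. Airy_Ai x = 0)"

end

(*
  Ai solves y'' = x y, so \<psi> = Ai'/Ai solves the Riccati equation \<psi>' = x - \<psi>\<^sup>2. On [0, \<infinity>) Ai is
  bounded (by an absolutely convergent integral representation), and a bounded solution with
  Ai(0) > 0, Ai'(0) < 0 stays positive and decreasing; on (a\<^sub>1, 0) Ai is positive because a\<^sub>1 is
  its largest zero. A Riccati comparison then gives x Ai\<^sup>2 < Ai'\<^sup>2 there, i.e. \<psi>' < 0, which is the
  monotonicity of \<Psi>. For \<Phi>(s) = s \<psi>(a\<^sub>1 + s) the derivative has the sign of a function K with
  K(0) = 0 and K' = Ai(a\<^sub>1 + s)\<^sup>2 (2 a\<^sub>1 + 3 s), and K is still negative at s = -a\<^sub>1, so K < 0 for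
  s > 0. The limit \<Phi>(0+) = 1 holds because a\<^sub>1 is a simple zero. Smoothness holds because \<Phi> and
  \<Psi> are restrictions of quotients of the entire power series of Ai and Ai'.
*)
theory Submission
  imports Defs "HOL-Complex_Analysis.Complex_Analysis" "HOL-Real_Asymp.Real_Asymp"
begin

section \<open>The Maclaurin series of Ai\<close>

definition airy_f_coeff :: "nat \<Rightarrow> real" where
  "airy_f_coeff k = 3 ^ k * pochhammer (1/3) k / fact (3*k)"

definition airy_g_coeff :: "nat \<Rightarrow> real" where
  "airy_g_coeff k = 3 ^ k * pochhammer (2/3) k / fact (3*k+1)"

lemma fact_plus_3: "fact (n + 3) = (real n + 1) * (real n + 2) * (real n + 3) * fact n"
  by (simp add: numeral_3_eq_3 algebra_simps)

lemma airy_f_coeff_Suc: "real ((3*k+2) * (3*k+3)) * airy_f_coeff (Suc k) = airy_f_coeff k"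
proof -
  define P where "P = 3 ^ k * pochhammer (1/3::real) k"
  define F where "F = (fact (3*k) :: real)"
  define d where "d = real ((3*k+2) * (3*k+3))"
  have 1: "3 ^ Suc k * pochhammer (1/3) (Suc k) = (3*k+1) * P"
    by (simp add: pochhammer_Suc P_def algebra_simps)
  have 2: "fact (3 * Suc k) = (3*k+1) * (d * F)"
    using fact_plus_3[of "3*k"] by (simp add: F_def d_def algebra_simps)
  have "d > 0" "F > 0" unfolding d_def F_def of_nat_0_less_iff by simp_all
  then show ?thesis
    unfolding airy_f_coeff_def 1 2 P_def[symmetric] F_def[symmetric] d_def[symmetric] by simp
qed

lemma airy_g_coeff_Suc: "real ((3*k+3) * (3*k+4)) * airy_g_coeff (Suc k) = airy_g_coeff k"
proof -
  define P where "P = 3 ^ k * pochhammer (2/3::real) k"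
  define F where "F = (fact (3*k+1) :: real)"
  define d where "d = real ((3*k+3) * (3*k+4))"
  have 1: "3 ^ Suc k * pochhammer (2/3) (Suc k) = (3*k+2) * P"
    by (simp add: pochhammer_Suc P_def algebra_simps)
  have 2: "fact (3 * Suc k + 1) = (3*k+2) * (d * F)"
    using fact_plus_3[of "3*k+1"] by (simp add: F_def d_def algebra_simps)
  have "d > 0" "F > 0" unfolding d_def F_def of_nat_0_less_iff by simp_all
  then show ?thesis
    unfolding airy_g_coeff_def 1 2 P_def[symmetric] F_def[symmetric] d_def[symmetric] by simp
qed

lemma abs_le_inverse_fact_of_ratio:
  fixes c :: "nat \<Rightarrow> real" and d :: "nat \<Rightarrow> nat"
  assumes "c 0 = 1" and ratio: "\<And>k. real (d k) * c (Suc k) = c k" and growth: "\<And>k. Suc k \<le> d k"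
  shows "\<bar>c k\<bar> \<le> 1 / fact k"
proof (induction k)
  case 0
  show ?case using assms(1) by simp
next
  case (Suc k)
  have "d k > 0" using growth[of k] by linarith
  then have "\<bar>c (Suc k)\<bar> = \<bar>c k\<bar> / d k"
    unfolding ratio[of k, symmetric] by (simp add: abs_mult)
  also have "\<dots> \<le> (1 / fact k) / Suc k"
    using Suc.IH growth[of k] by (intro frac_le) auto
  also have "\<dots> = 1 / fact (Suc k)" by simp
  finally show ?case .
qed

lemma abs_airy_f_coeff_le: "\<bar>airy_f_coeff k\<bar> \<le> 1 / fact k"
proof (rule abs_le_inverse_fact_of_ratio)
  show "airy_f_coeff 0 = 1" by (simp add: airy_f_coeff_def)
  show "real ((3*k+2) * (3*k+3)) * airy_f_coeff (Suc k) = airy_f_coeff k" for k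
    by (rule airy_f_coeff_Suc)
  show "Suc k \<le> (3*k+2) * (3*k+3)" for k by (simp add: algebra_simps)
qed

lemma abs_airy_g_coeff_le: "\<bar>airy_g_coeff k\<bar> \<le> 1 / fact k"
proof (rule abs_le_inverse_fact_of_ratio)
  show "airy_g_coeff 0 = 1" by (simp add: airy_g_coeff_def)
  show "real ((3*k+3) * (3*k+4)) * airy_g_coeff (Suc k) = airy_g_coeff k" for k
    by (rule airy_g_coeff_Suc)
  show "Suc k \<le> (3*k+3) * (3*k+4)" for k by (simp add: algebra_simps)
qed

text \<open>The power series coefficients of \<open>\<Sum>k. c k * x ^ (3*k+j)\<close>.\<close>
definition spread3 :: "nat \<Rightarrow> (nat \<Rightarrow> real) \<Rightarrow> nat \<Rightarrow> real" where
  "spread3 j c n = (if n mod 3 = j then c (n div 3) else 0)"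

lemma spread3_at [simp]: "j < 3 \<Longrightarrow> spread3 j c (3*k+j) = c k"
  by (simp add: spread3_def)

lemma sums_spread3_iff:
  assumes "j < 3"
  shows "(\<lambda>k. c k * x ^ (3*k+j)) sums s \<longleftrightarrow> (\<lambda>n. spread3 j c n * x ^ n) sums s"
proof -
  have "strict_mono (\<lambda>k::nat. 3*k+j)" by (auto simp: strict_mono_def)
  moreover have "spread3 j c n * x ^ n = 0" if "n \<notin> range (\<lambda>k. 3*k+j)" for n
  proof -
    have "n mod 3 \<noteq> j"
    proof
      assume "n mod 3 = j"
      then have "n = 3 * (n div 3) + j" by presburger
      then have "n \<in> range (\<lambda>k. 3*k+j)" by (metis rangeI)
      then show False using that by simp
    qed
    then show ?thesis by (simp add: spread3_def)
  qed
  ultimately show ?thesis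
    using sums_mono_reindex[of "\<lambda>k. 3*k+j" "\<lambda>n. spread3 j c n * x ^ n"] assms by simp
qed

lemma summable_stride3_of_le_inverse_fact:
  fixes c :: "nat \<Rightarrow> real"
  assumes "\<And>k. \<bar>c k\<bar> \<le> 1 / fact k"
  shows "summable (\<lambda>k. c k * x ^ (3*k+j))"
proof (rule summable_comparison_test[OF _ summable_mult2[OF summable_exp]])
  show "\<exists>N. \<forall>k\<ge>N. norm (c k * x ^ (3*k+j)) \<le> inverse (fact k) * (\<bar>x\<bar> ^ 3) ^ k * \<bar>x\<bar> ^ j"
  proof (intro exI allI impI)
    fix k
    have "\<bar>x\<bar> ^ (3*k+j) = (\<bar>x\<bar> ^ 3) ^ k * \<bar>x\<bar> ^ j"
      by (simp only: power_add power_mult)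
    then have "norm (c k * x ^ (3*k+j)) = \<bar>c k\<bar> * ((\<bar>x\<bar> ^ 3) ^ k * \<bar>x\<bar> ^ j)"
      by (simp only: real_norm_def abs_mult power_abs)
    also have "\<dots> \<le> inverse (fact k) * ((\<bar>x\<bar> ^ 3) ^ k * \<bar>x\<bar> ^ j)"
      using assms by (intro mult_right_mono) (auto simp: divide_inverse)
    finally show "norm (c k * x ^ (3*k+j)) \<le> inverse (fact k) * (\<bar>x\<bar> ^ 3) ^ k * \<bar>x\<bar> ^ j"
      by (simp only: mult.assoc)
  qed
qed

lemma airy_f_sums: "(\<lambda>n. spread3 0 airy_f_coeff n * x ^ n) sums airy_f x"
proof -
  have "(\<lambda>k. airy_f_coeff k * x ^ (3*k+0)) sums airy_f x"
    using summable_sums[OF summable_stride3_of_le_inverse_fact[OF abs_airy_f_coeff_le,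
          where x = x and j = 0]]
    by (simp add: airy_f_def airy_f_coeff_def)
  then show ?thesis using sums_spread3_iff[of 0 airy_f_coeff x "airy_f x"] by simp
qed

lemma airy_g_sums: "(\<lambda>n. spread3 1 airy_g_coeff n * x ^ n) sums airy_g x"
proof -
  have "(\<lambda>k. airy_g_coeff k * x ^ (3*k+1)) sums airy_g x"
    using summable_sums[OF summable_stride3_of_le_inverse_fact[OF abs_airy_g_coeff_le,
          where x = x and j = 1]]
    by (simp add: airy_g_def airy_g_coeff_def)
  then show ?thesis using sums_spread3_iff[of 1 airy_g_coeff x "airy_g x"] by simp
qed

text \<open>\<open>airy_c1 = Ai(0)\<close> and \<open>airy_c2 = -Ai'(0)\<close>, as in DLMF 9.2.3-9.2.4.\<close>
definition airy_c1 :: real where "airy_c1 = 1 / (3 powr (2/3) * Gamma (2/3))"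
definition airy_c2 :: real where "airy_c2 = 1 / (3 powr (1/3) * Gamma (1/3))"

lemma airy_c1_pos: "airy_c1 > 0" and airy_c2_pos: "airy_c2 > 0"
  by (simp_all add: airy_c1_def airy_c2_def)

definition airy_coeff :: "nat \<Rightarrow> real" where
  "airy_coeff n = airy_c1 * spread3 0 airy_f_coeff n - airy_c2 * spread3 1 airy_g_coeff n"

lemma Airy_Ai_sums: "(\<lambda>n. airy_coeff n * x ^ n) sums Airy_Ai x"
  using sums_diff[OF sums_mult[OF airy_f_sums, of airy_c1] sums_mult[OF airy_g_sums, of airy_c2]]
  by (simp add: Airy_Ai_def airy_coeff_def airy_c1_def airy_c2_def algebra_simps)

lemma spread3_recurrence:
  assumes "j < 3" and rec: "\<And>k. real ((3*k+j+2) * (3*k+j+3)) * c (Suc k) = c k"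
  shows "real ((m+2) * (m+3)) * spread3 j c (m+3) = spread3 j c m"
proof (cases "m mod 3 = j")
  case True
  define k where "k = m div 3"
  have m: "m = 3*k+j" using True unfolding k_def by presburger
  have "3*k+j+3 = 3 * Suc k + j" by simp
  then have "spread3 j c (m+3) = c (Suc k)"
    unfolding m by (simp only: spread3_at[OF assms(1)])
  moreover have "spread3 j c m = c k"
    unfolding m by (rule spread3_at[OF assms(1)])
  ultimately show ?thesis using rec[of k] unfolding m by simp
next
  case False
  then show ?thesis by (simp add: spread3_def)
qed

lemma airy_coeff_recurrence: "real ((m+2) * (m+3)) * airy_coeff (m+3) = airy_coeff m"
proof -
  have "real ((m+2) * (m+3)) * spread3 0 airy_f_coeff (m+3) = spread3 0 airy_f_coeff m"
  proof (rule spread3_recurrence)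
    show "real ((3*k+0+2) * (3*k+0+3)) * airy_f_coeff (Suc k) = airy_f_coeff k" for k
      using airy_f_coeff_Suc[of k] by simp
  qed simp
  moreover have "real ((m+2) * (m+3)) * spread3 1 airy_g_coeff (m+3) = spread3 1 airy_g_coeff m"
  proof (rule spread3_recurrence)
    show "real ((3*k+1+2) * (3*k+1+3)) * airy_g_coeff (Suc k) = airy_g_coeff k" for k
      using airy_g_coeff_Suc[of k] by (simp add: algebra_simps)
  qed simp
  moreover have "real ((m+2) * (m+3)) * airy_coeff (m+3)
      = airy_c1 * (real ((m+2) * (m+3)) * spread3 0 airy_f_coeff (m+3))
        - airy_c2 * (real ((m+2) * (m+3)) * spread3 1 airy_g_coeff (m+3))"
    unfolding airy_coeff_def by (simp only: right_diff_distrib mult.left_commute)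
  ultimately show ?thesis by (simp only: airy_coeff_def)
qed

text \<open>The coefficient recurrence is the Airy equation \<open>y'' = x y\<close> read off term by term.\<close>
lemma diffs_diffs_airy_coeff:
  "diffs (diffs airy_coeff) 0 = 0" "diffs (diffs airy_coeff) (Suc n) = airy_coeff n"
proof -
  have "airy_coeff 2 = 0" by (simp add: airy_coeff_def spread3_def)
  then show "diffs (diffs airy_coeff) 0 = 0" by (simp add: diffs_def numeral_2_eq_2)
  show "diffs (diffs airy_coeff) (Suc n) = airy_coeff n"
    using airy_coeff_recurrence[of n] by (simp add: diffs_def algebra_simps numeral_3_eq_3 numeral_2_eq_2)
qed

text \<open>Generic in the field, so that the same series gives \<open>Ai\<close> on the reals and its entire
  extension to the complex plane.\<close>
definition airy_series :: "'a::{real_normed_field,banach} \<Rightarrow> 'a" where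
  "airy_series z = (\<Sum>n. of_real (airy_coeff n) * z ^ n)"

definition airy_series' :: "'a::{real_normed_field,banach} \<Rightarrow> 'a" where
  "airy_series' z = (\<Sum>n. of_real (diffs airy_coeff n) * z ^ n)"

lemma summable_airy_series: "summable (\<lambda>n. of_real (airy_coeff n) * z ^ n)"
  for z :: "'a::{real_normed_field,banach}"
proof -
  have "summable (\<lambda>n. of_real (airy_coeff n * (norm z + 1) ^ n) :: 'a)"
    by (rule summable_of_real[OF sums_summable[OF Airy_Ai_sums]])
  then have "summable (\<lambda>n. of_real (airy_coeff n) * of_real (norm z + 1) ^ n :: 'a)"
    by simp
  from powser_insidea[OF this] show ?thesis
    by (rule summable_norm_cancel) simp
qed

lemma summable_airy_series': "summable (\<lambda>n. of_real (diffs airy_coeff n) * z ^ n)"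
  for z :: "'a::{real_normed_field,banach}"
  using termdiff_converges_all[OF summable_airy_series] by (simp add: diffs_of_real)

lemma airy_series_has_field_derivative:
  "(airy_series has_field_derivative airy_series' z) (at z)"
  for z :: "'a::{real_normed_field,banach}"
  unfolding airy_series_def airy_series'_def
  using termdiffs_strong_converges_everywhere[OF summable_airy_series] by (simp add: diffs_of_real)

lemma airy_series'_has_field_derivative:
  "(airy_series' has_field_derivative z * airy_series z) (at z)"
  for z :: "'a::{real_normed_field,banach}"
proof -
  define t where "t n = of_real (diffs (diffs airy_coeff) n) * z ^ n" for n
  have "(\<lambda>n. t (Suc n)) sums (z * airy_series z)"
    unfolding t_def diffs_diffs_airy_coeff airy_series_def
    using sums_mult[OF summable_sums[OF summable_airy_series], of z] by (simp add: mult_ac)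
  moreover have "t 0 = 0" by (simp add: t_def diffs_diffs_airy_coeff)
  ultimately have "t sums (z * airy_series z)" using sums_Suc_iff[of t] by simp
  moreover have "(airy_series' has_field_derivative suminf t) (at z)"
    unfolding airy_series'_def t_def
    using termdiffs_strong_converges_everywhere[OF summable_airy_series'] by (simp add: diffs_of_real)
  ultimately show ?thesis by (simp add: sums_unique[symmetric])
qed

lemma Airy_Ai_eq_airy_series: "Airy_Ai = airy_series"
  by (rule ext) (simp add: airy_series_def sums_unique[OF Airy_Ai_sums])

definition Airy_Ai' :: "real \<Rightarrow> real" where "Airy_Ai' = airy_series'"

lemma Airy_Ai_has_real_derivative: "(Airy_Ai has_real_derivative Airy_Ai' x) (at x)"
  unfolding Airy_Ai_eq_airy_series Airy_Ai'_def by (rule airy_series_has_field_derivative)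

lemma Airy_Ai'_has_real_derivative: "(Airy_Ai' has_real_derivative x * Airy_Ai x) (at x)"
  unfolding Airy_Ai_eq_airy_series Airy_Ai'_def by (rule airy_series'_has_field_derivative)

lemma deriv_Airy_Ai: "deriv Airy_Ai = Airy_Ai'"
  using DERIV_imp_deriv[OF Airy_Ai_has_real_derivative] by blast

lemma Airy_Ai_0: "Airy_Ai 0 = airy_c1"
  using sums_unique[OF Airy_Ai_sums[of 0]] powser_zero[of airy_coeff]
  by (simp add: airy_coeff_def spread3_def airy_f_coeff_def)

lemma Airy_Ai'_0: "Airy_Ai' 0 = - airy_c2"
  using powser_zero[of "diffs airy_coeff"]
  by (simp add: Airy_Ai'_def airy_series'_def diffs_def airy_coeff_def spread3_def airy_g_coeff_def)

lemma airy_series_of_real: "airy_series (of_real x) = of_real (Airy_Ai x)"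
proof -
  have "(\<lambda>n. of_real (airy_coeff n) * of_real x ^ n) sums (of_real (Airy_Ai x) :: 'a)"
    using sums_of_real[OF Airy_Ai_sums[of x]] by simp
  then show ?thesis unfolding airy_series_def by (rule sums_unique[symmetric])
qed

lemma airy_series'_of_real: "airy_series' (of_real x) = of_real (Airy_Ai' x)"
proof -
  have "(\<lambda>n. diffs airy_coeff n * x ^ n) sums Airy_Ai' x"
    using summable_sums[OF summable_airy_series'[of x]] by (simp add: Airy_Ai'_def airy_series'_def)
  then have "(\<lambda>n. of_real (diffs airy_coeff n) * of_real x ^ n) sums (of_real (Airy_Ai' x) :: 'a)"
    using sums_of_real by fastforce
  then show ?thesis unfolding airy_series'_def by (rule sums_unique[symmetric])
qed

section \<open>Solutions of the Airy equation\<close>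

definition airy_solution :: "(real \<Rightarrow> real) \<Rightarrow> (real \<Rightarrow> real) \<Rightarrow> bool" where
  "airy_solution y y' \<longleftrightarrow>
     (\<forall>x. (y has_real_derivative y' x) (at x)) \<and> (\<forall>x. (y' has_real_derivative x * y x) (at x))"

lemma airy_solutionD:
  assumes "airy_solution y y'"
  shows "(y has_real_derivative y' x) (at x)" "(y' has_real_derivative x * y x) (at x)"
  using assms by (auto simp: airy_solution_def)

lemma airy_solution_Airy_Ai: "airy_solution Airy_Ai Airy_Ai'"
  by (simp add: airy_solution_def Airy_Ai_has_real_derivative Airy_Ai'_has_real_derivative)

lemma airy_solution_diff:
  "airy_solution y y' \<Longrightarrow> airy_solution z z' \<Longrightarrow> airy_solution (\<lambda>x. y x - z x) (\<lambda>x. y' x - z' x)"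
  unfolding airy_solution_def by (auto intro!: derivative_eq_intros simp: algebra_simps)

lemma airy_solution_uminus: "airy_solution y y' \<Longrightarrow> airy_solution (\<lambda>x. - y x) (\<lambda>x. - y' x)"
  unfolding airy_solution_def by (auto intro!: derivative_eq_intros)

lemma airy_solution_continuous_on: "airy_solution y y' \<Longrightarrow> continuous_on A y"
  by (meson airy_solutionD(1) DERIV_isCont continuous_at_imp_continuous_on)

lemma vanishes_if_abs_deriv_le:
  fixes E E' :: "real \<Rightarrow> real"
  assumes deriv: "\<And>s. (E has_real_derivative E' s) (at s)" and nonneg: "\<And>s. 0 \<le> E s"
    and bound: "\<And>s. min a x \<le> s \<Longrightarrow> s \<le> max a x \<Longrightarrow> \<bar>E' s\<bar> \<le> L * E s" and "E a = 0"
  shows "E x = 0"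
proof -
  have "E x \<le> 0"
  proof (cases "a \<le> x")
    case True
    define G where "G s = exp (- L * (s - a)) * E s" for s
    have "G x \<le> G a"
    proof (rule DERIV_nonpos_imp_nonincreasing[OF True])
      fix s assume "a \<le> s" "s \<le> x"
      then have "\<bar>E' s\<bar> \<le> L * E s" using True by (intro bound) auto
      then have "E' s - L * E s \<le> 0" by linarith
      moreover have "(G has_real_derivative exp (- L * (s - a)) * (E' s - L * E s)) (at s)"
        unfolding G_def by (auto intro!: derivative_eq_intros deriv simp: algebra_simps)
      ultimately show "\<exists>d. (G has_real_derivative d) (at s) \<and> d \<le> 0"
        by (meson exp_ge_zero mult_nonneg_nonpos)
    qed
    then show ?thesis using \<open>E a = 0\<close> by (simp add: G_def mult_le_0_iff)
  next
    case False
    define G where "G s = exp (L * (s - a)) * E s" for s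
    have "G x \<le> G a"
    proof (rule DERIV_nonneg_imp_nondecreasing[of x a G])
      show "x \<le> a" using False by simp
      fix s assume "x \<le> s" "s \<le> a"
      then have "\<bar>E' s\<bar> \<le> L * E s" using False by (intro bound) auto
      then have "E' s + L * E s \<ge> 0" by linarith
      moreover have "(G has_real_derivative exp (L * (s - a)) * (E' s + L * E s)) (at s)"
        unfolding G_def by (auto intro!: derivative_eq_intros deriv simp: algebra_simps)
      ultimately show "\<exists>d. (G has_real_derivative d) (at s) \<and> 0 \<le> d"
        by (meson exp_ge_zero mult_nonneg_nonneg)
    qed
    then show ?thesis using \<open>E a = 0\<close> by (simp add: G_def mult_le_0_iff)
  qed
  with nonneg[of x] show ?thesis by linarith
qed

lemma airy_solution_unique:
  assumes sol: "airy_solution y y'" and "y a = 0" "y' a = 0"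
  shows "y x = 0" "y' x = 0"
proof -
  define E where "E s = (y s)\<^sup>2 + (y' s)\<^sup>2" for s
  have "E x = 0"
  proof (rule vanishes_if_abs_deriv_le[of E "\<lambda>s. 2 * (1 + s) * (y s * y' s)" a x "\<bar>a\<bar> + \<bar>x\<bar> + 1"])
    show "(E has_real_derivative 2 * (1 + s) * (y s * y' s)) (at s)" for s
      unfolding E_def by (auto intro!: derivative_eq_intros airy_solutionD[OF sol] simp: algebra_simps)
    show "\<bar>2 * (1 + s) * (y s * y' s)\<bar> \<le> (\<bar>a\<bar> + \<bar>x\<bar> + 1) * E s"
      if "min a x \<le> s" "s \<le> max a x" for s
    proof -
      have "\<bar>2 * (1 + s) * (y s * y' s)\<bar> = \<bar>1 + s\<bar> * (2 * \<bar>y s\<bar> * \<bar>y' s\<bar>)"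
        by (simp only: abs_mult abs_numeral mult_ac)
      also have "\<dots> \<le> (\<bar>a\<bar> + \<bar>x\<bar> + 1) * E s"
        unfolding E_def using that sum_squares_bound[of "\<bar>y s\<bar>" "\<bar>y' s\<bar>"]
        by (intro mult_mono) auto
      finally show ?thesis .
    qed
  qed (use assms in \<open>simp_all add: E_def\<close>)
  then show "y x = 0" "y' x = 0" by (simp_all add: E_def)
qed

lemma pos_if_no_zero:
  fixes f :: "real \<Rightarrow> real"
  assumes "continuous_on {c..d} f" and "\<And>s. s \<in> {c..d} \<Longrightarrow> f s \<noteq> 0"
    and "t \<in> {c..d}" "u \<in> {c..d}" "f t > 0"
  shows "f u > 0"
proof (rule ccontr)
  assume "\<not> f u > 0"
  then have "f u < 0" using assms(2,4) by force
  have "connected (f ` {c..d})" by (rule connected_continuous_image[OF assms(1)]) simp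
  then have "0 \<in> f ` {c..d}"
    using connectedD_interval[of "f ` {c..d}" "f u" "f t" 0] \<open>f u < 0\<close> assms(3-5) by auto
  then show False using assms(2) by auto
qed

text \<open>Sturm comparison with \<open>sin (s - c)\<close>, a solution of \<open>w'' = - w\<close>: on \<open>s \<le> -1\<close> the Airy
  equation \<open>y'' = s y\<close> oscillates at least as fast, so \<open>y\<close> must vanish between consecutive zeros of
  the sine.\<close>
lemma airy_solution_not_pos_on_interval:
  assumes sol: "airy_solution y y'" and "c + pi \<le> -1" and pos: "\<And>s. s \<in> {c..c+pi} \<Longrightarrow> y s > 0"
  shows False
proof -
  define W where "W s = y' s * sin (s - c) - y s * cos (s - c)" for s
  have "W (c + pi) \<le> W c"
  proof (rule DERIV_nonpos_imp_nonincreasing[of c "c + pi" W])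
    show "c \<le> c + pi" using pi_gt_zero by linarith
    fix s assume s: "c \<le> s" "s \<le> c + pi"
    have "(W has_real_derivative (s + 1) * y s * sin (s - c)) (at s)"
      unfolding W_def by (auto intro!: derivative_eq_intros airy_solutionD[OF sol] simp: algebra_simps)
    moreover have "(s + 1) * y s * sin (s - c) \<le> 0"
      using s assms(2) pos[of s] by (intro mult_nonpos_nonneg sin_ge_zero) auto
    ultimately show "\<exists>d. (W has_real_derivative d) (at s) \<and> d \<le> 0" by blast
  qed
  moreover have "y c > 0" "y (c + pi) > 0" using pos pi_gt_zero by auto
  ultimately show False by (simp add: W_def)
qed

lemma airy_solution_has_zero:
  assumes sol: "airy_solution y y'" and "c + pi \<le> -1"
  shows "\<exists>s\<in>{c..c+pi}. y s = 0"
proof (rule ccontr)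
  assume "\<not> ?thesis"
  then have nz: "\<And>s. s \<in> {c..c+pi} \<Longrightarrow> y s \<noteq> 0" by blast
  have c: "c \<in> {c..c+pi}" using pi_gt_zero by simp
  have no_pos: False if "airy_solution z z'" "\<And>s. s \<in> {c..c+pi} \<Longrightarrow> z s \<noteq> 0" "z c > 0"
    for z z'
    using pos_if_no_zero[OF airy_solution_continuous_on[OF that(1)] that(2) c _ that(3)]
      airy_solution_not_pos_on_interval[OF that(1) assms(2)] by blast
  show False
  proof (cases "y c > 0")
    case True
    then show False using no_pos[of y y'] sol nz by blast
  next
    case False
    then have "- y c > 0" using nz[OF c] by simp
    then show False
      using no_pos[of "\<lambda>s. - y s" "\<lambda>s. - y' s"] airy_solution_uminus[OF sol] nz by force
  qed
qed

lemma unbounded_if_deriv_ge: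
  fixes f f' :: "real \<Rightarrow> real"
  assumes deriv: "\<And>s. s \<ge> p \<Longrightarrow> (f has_real_derivative f' s) (at s)"
    and ge: "\<And>s. s \<ge> p \<Longrightarrow> f' s \<ge> c" and "c > 0"
  shows "\<exists>s\<ge>p. f s > M"
proof -
  define s where "s = p + (\<bar>M\<bar> + \<bar>f p\<bar> + 1) / c"
  have "s \<ge> p" using \<open>c > 0\<close> by (simp add: s_def)
  have "f p - c * p \<le> f s - c * s"
  proof (rule DERIV_nonneg_imp_nondecreasing[OF \<open>s \<ge> p\<close>, where f = "\<lambda>r. f r - c * r"])
    fix r assume "p \<le> r" "r \<le> s"
    then show "\<exists>d. ((\<lambda>r. f r - c * r) has_real_derivative d) (at r) \<and> 0 \<le> d"
      using deriv[of r] ge[of r] by (intro exI conjI) (auto intro!: derivative_eq_intros)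
  qed
  moreover have "c * (s - p) = \<bar>M\<bar> + \<bar>f p\<bar> + 1" using \<open>c > 0\<close> by (simp add: s_def)
  ultimately have "f s > M" by (simp add: algebra_simps)
  with \<open>s \<ge> p\<close> show ?thesis by blast
qed

lemma airy_solution_product_has_real_derivative:
  "airy_solution y y' \<Longrightarrow>
     ((\<lambda>s. y s * y' s) has_real_derivative (y' s)\<^sup>2 + s * (y s)\<^sup>2) (at s)"
  by (auto intro!: derivative_eq_intros dest: airy_solutionD simp: power2_eq_square)

text \<open>On \<open>[0, \<infinity>)\<close> the product \<open>y y'\<close> is nondecreasing, so a positive value of it would make
  \<open>(y\<^sup>2)' = 2 y y'\<close> stay positive and \<open>y\<close> unbounded.\<close>
lemma airy_solution_bounded_product_nonpos:
  assumes sol: "airy_solution y y'" and bounded: "\<And>x. x \<ge> 0 \<Longrightarrow> \<bar>y x\<bar> \<le> B" and "p \<ge> 0"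
  shows "y p * y' p \<le> 0"
proof (rule ccontr)
  assume "\<not> y p * y' p \<le> 0"
  have "\<exists>s\<ge>p. (y s)\<^sup>2 > B\<^sup>2"
  proof (rule unbounded_if_deriv_ge)
    show "((\<lambda>s. (y s)\<^sup>2) has_real_derivative 2 * (y s * y' s)) (at s)" for s
      by (auto intro!: derivative_eq_intros airy_solutionD[OF sol])
    show "2 * (y s * y' s) \<ge> 2 * (y p * y' p)" if "s \<ge> p" for s
    proof -
      have "y p * y' p \<le> y s * y' s"
      proof (rule DERIV_nonneg_imp_nondecreasing[OF that, where f = "\<lambda>s. y s * y' s"])
        fix r assume "p \<le> r"
        then have "(y' r)\<^sup>2 + r * (y r)\<^sup>2 \<ge> 0" using \<open>p \<ge> 0\<close> by simp
        with airy_solution_product_has_real_derivative[OF sol]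
        show "\<exists>d. ((\<lambda>s. y s * y' s) has_real_derivative d) (at r) \<and> 0 \<le> d" by blast
      qed
      then show ?thesis by simp
    qed
  qed (use \<open>\<not> y p * y' p \<le> 0\<close> in simp)
  then obtain s where "s \<ge> p" "(y s)\<^sup>2 > B\<^sup>2" by blast
  have "\<bar>y s\<bar> \<le> B" using bounded \<open>s \<ge> p\<close> \<open>p \<ge> 0\<close> by simp
  then have "(y s)\<^sup>2 \<le> B\<^sup>2" using power_mono[of "\<bar>y s\<bar>" B 2] by simp
  with \<open>(y s)\<^sup>2 > B\<^sup>2\<close> show False by simp
qed

text \<open>Unless \<open>y' 0 = 0\<close>, \<open>(y y')' = y'\<^sup>2 + s y\<^sup>2\<close> is positive on \<open>[0, \<infinity>)\<close> by uniqueness, so \<open>y y'\<close>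
  is strictly increasing there.\<close>
lemma airy_solution_bounded_product_neg:
  assumes sol: "airy_solution y y'" and bounded: "\<And>x. x \<ge> 0 \<Longrightarrow> \<bar>y x\<bar> \<le> B"
    and "y' 0 \<noteq> 0" and "x \<ge> 0"
  shows "y x * y' x < 0"
proof -
  have pos: "(y' s)\<^sup>2 + s * (y s)\<^sup>2 > 0" if "s \<ge> 0" for s
  proof (rule ccontr)
    assume "\<not> ?thesis"
    moreover have "s * (y s)\<^sup>2 \<ge> 0" using \<open>s \<ge> 0\<close> by simp
    ultimately have "(y' s)\<^sup>2 = 0" "s * (y s)\<^sup>2 = 0" by (smt (verit) zero_le_power2)+
    then have "y' s = 0 \<and> (s = 0 \<or> y s = 0)" by simp
    then show False
      using airy_solution_unique(2)[OF sol, of s 0] \<open>y' 0 \<noteq> 0\<close> by auto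
  qed
  have "y x * y' x < y (x + 1) * y' (x + 1)"
  proof (rule DERIV_pos_imp_increasing[of x "x + 1" "\<lambda>s. y s * y' s"])
    fix r assume "x \<le> r" "r \<le> x + 1"
    with airy_solution_product_has_real_derivative[OF sol] pos[of r] \<open>x \<ge> 0\<close>
    show "\<exists>d. ((\<lambda>s. y s * y' s) has_real_derivative d) (at r) \<and> 0 < d" by auto
  qed simp
  with airy_solution_bounded_product_nonpos[OF sol bounded, of "x + 1"] \<open>x \<ge> 0\<close> show ?thesis
    by simp
qed

lemma airy_solution_bounded_pos_decreasing:
  assumes sol: "airy_solution y y'" and bounded: "\<And>x. x \<ge> 0 \<Longrightarrow> \<bar>y x\<bar> \<le> B"
    and "y 0 > 0" "y' 0 \<noteq> 0" and "x \<ge> 0"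
  shows "y x > 0" "y' x < 0"
proof -
  have prod: "y s * y' s < 0" if "s \<ge> 0" for s
    by (rule airy_solution_bounded_product_neg[OF sol bounded \<open>y' 0 \<noteq> 0\<close> that])
  show "y x > 0"
    using pos_if_no_zero[OF airy_solution_continuous_on[OF sol], of 0 x 0 x] prod \<open>y 0 > 0\<close> \<open>x \<ge> 0\<close>
    by force
  with prod[OF \<open>x \<ge> 0\<close>] show "y' x < 0" by (simp add: mult_less_0_iff)
qed

lemma riccati_no_negative_nondecreasing_solution:
  fixes u :: "real \<Rightarrow> real"
  assumes "t \<ge> 0" and deriv: "\<And>s. s \<ge> t \<Longrightarrow> (u has_real_derivative s - (u s)\<^sup>2) (at s)"
    and neg: "\<And>s. s \<ge> t \<Longrightarrow> u s < 0" and mono: "\<And>s. s \<ge> t \<Longrightarrow> u t \<le> u s"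
  shows False
proof -
  define c where "c = - u t"
  have "c > 0" using neg[of t] by (simp add: c_def)
  have bounded: "(u s)\<^sup>2 \<le> c\<^sup>2" if "s \<ge> t" for s
    using neg[OF that] mono[OF that] by (simp add: c_def abs_le_square_iff[symmetric])
  define S where "S = t + c\<^sup>2 + 1"
  have "S \<ge> t" by (simp add: S_def)
  have "u S - S \<le> u (S + c + 1) - (S + c + 1)"
  proof (rule DERIV_nonneg_imp_nondecreasing[of S "S + c + 1" "\<lambda>s. u s - s"])
    show "S \<le> S + c + 1" using \<open>c > 0\<close> by simp
    fix s assume s: "S \<le> s" "s \<le> S + c + 1"
    have "s \<ge> t" using s \<open>S \<ge> t\<close> by linarith
    then have "s - (u s)\<^sup>2 - 1 \<ge> 0" using bounded[of s] s \<open>t \<ge> 0\<close> by (simp add: S_def)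
    then show "\<exists>d. ((\<lambda>s. u s - s) has_real_derivative d) (at s) \<and> 0 \<le> d"
      using \<open>s \<ge> t\<close> by (intro exI conjI) (auto intro!: derivative_eq_intros deriv)
  qed
  then have "u (S + c + 1) \<ge> u S + c + 1" by simp
  moreover have "u S \<ge> - c" using mono[OF \<open>S \<ge> t\<close>] by (simp add: c_def)
  moreover have "u (S + c + 1) < 0" using neg \<open>S \<ge> t\<close> \<open>c > 0\<close> by simp
  ultimately show False by linarith
qed

text \<open>For a positive decreasing solution, \<open>u = y'/y\<close> solves the Riccati equation \<open>u' = s - u\<^sup>2\<close>;
  if \<open>t y(t)\<^sup>2 \<ge> y'(t)\<^sup>2\<close> held at some \<open>t\<close>, it would hold from then on (\<open>(s y\<^sup>2 - y'\<^sup>2)' = y\<^sup>2\<close>),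
  making \<open>u\<close> nondecreasing and negative forever, which the Riccati equation forbids.\<close>
lemma airy_solution_riccati_bound:
  assumes sol: "airy_solution y y'" and pos: "\<And>x. x \<ge> 0 \<Longrightarrow> y x > 0 \<and> y' x < 0"
    and "t \<ge> 0"
  shows "t * (y t)\<^sup>2 < (y' t)\<^sup>2"
proof (rule ccontr)
  assume contra: "\<not> ?thesis"
  define m where "m s = s * (y s)\<^sup>2 - (y' s)\<^sup>2" for s
  have m_nonneg: "m s \<ge> 0" if "s \<ge> t" for s
  proof -
    have "m t \<le> m s"
    proof (rule DERIV_nonneg_imp_nondecreasing[OF that, where f = m])
      fix r
      have "(m has_real_derivative (y r)\<^sup>2) (at r)"
        unfolding m_def
        by (auto intro!: derivative_eq_intros airy_solutionD[OF sol] simp: power2_eq_square)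
      then show "\<exists>d. (m has_real_derivative d) (at r) \<and> 0 \<le> d" by auto
    qed
    with contra show ?thesis by (simp add: m_def)
  qed
  define u where "u s = y' s / y s" for s
  have du: "(u has_real_derivative s - (u s)\<^sup>2) (at s)" and du_eq: "s - (u s)\<^sup>2 = m s / (y s)\<^sup>2"
    if "s \<ge> 0" for s
  proof -
    have "y s \<noteq> 0" using pos[OF that] by simp
    then show "(u has_real_derivative s - (u s)\<^sup>2) (at s)"
      unfolding u_def
      by (auto intro!: derivative_eq_intros airy_solutionD[OF sol] simp: power2_eq_square field_simps)
    show "s - (u s)\<^sup>2 = m s / (y s)\<^sup>2"
      using \<open>y s \<noteq> 0\<close> by (simp add: u_def m_def field_simps power2_eq_square)
  qed
  show False
  proof (rule riccati_no_negative_nondecreasing_solution[OF \<open>t \<ge> 0\<close>])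
    show "(u has_real_derivative s - (u s)\<^sup>2) (at s)" if "s \<ge> t" for s
      using du that \<open>t \<ge> 0\<close> by simp
    show "u s < 0" if "s \<ge> t" for s
      using pos[of s] that \<open>t \<ge> 0\<close> by (simp add: u_def divide_neg_pos)
    show "u t \<le> u s" if "s \<ge> t" for s
    proof (rule DERIV_nonneg_imp_nondecreasing[OF that, where f = u])
      fix r assume "t \<le> r"
      then have "r - (u r)\<^sup>2 \<ge> 0" using \<open>t \<ge> 0\<close> by (simp add: du_eq m_nonneg)
      with du[of r] \<open>t \<le> r\<close> \<open>t \<ge> 0\<close> show "\<exists>d. (u has_real_derivative d) (at r) \<and> 0 \<le> d" by auto
    qed
  qed
qed

section \<open>An integral representation of Ai\<close>

lemma exp_dominated_integrable_on:
  fixes h :: "real \<Rightarrow> real"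
  assumes "continuous_on {a..} h" and "\<And>r. r \<ge> a \<Longrightarrow> \<bar>h r\<bar> \<le> C * exp (-r)"
  shows "h integrable_on {a..}"
proof (rule measurable_bounded_by_integrable_imp_integrable_real)
  show "h \<in> borel_measurable (lebesgue_on {a..})"
    by (rule continuous_imp_measurable_on_sets_lebesgue[OF assms(1)]) auto
  show "(\<lambda>r. C * exp (-r)) integrable_on {a..}"
    using integrable_on_cmult_left[OF integrable_on_exp_minus_to_infinity[of 1 a], of C] by simp
qed (use assms(2) in auto)

lemma exp_dominated_tail_bound:
  fixes h :: "real \<Rightarrow> real"
  assumes cont: "continuous_on {0..} h" and bound: "\<And>r. r \<ge> 0 \<Longrightarrow> \<bar>h r\<bar> \<le> C * exp (-r)"
    and "b \<ge> 0"
  shows "\<bar>integral {0..} h - integral {0..b} h\<bar> \<le> C * exp (-b)"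
proof -
  have tail: "h integrable_on {b..}"
    using assms by (intro exp_dominated_integrable_on[where C = C]) (auto intro: continuous_on_subset)
  have "h integrable_on {0..b}"
    by (rule integrable_continuous_interval) (use cont in \<open>auto intro: continuous_on_subset\<close>)
  then have "(h has_integral (integral {0..b} h + integral {b..} h)) ({0..b} \<union> {b..})"
    using tail \<open>b \<ge> 0\<close> by (intro has_integral_Un) (auto intro: negligible_subset[of "{b}"])
  moreover have "{0..b} \<union> {b..} = {0::real..}" using \<open>b \<ge> 0\<close> by auto
  ultimately have "integral {0..} h - integral {0..b} h = integral {b..} h"
    by (simp add: integral_unique)
  also have "\<bar>\<dots>\<bar> \<le> integral {b..} (\<lambda>r. C * exp (-r))"
    using integral_norm_bound_integral[OF tail
        integrable_on_cmult_left[OF integrable_on_exp_minus_to_infinity[of 1 b], of C]] bound \<open>b \<ge> 0\<close>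
    by simp
  also have "\<dots> = C * exp (-b)"
  proof (rule integral_unique)
    show "((\<lambda>r. C * exp (-r)) has_integral C * exp (-b)) {b..}"
      using has_integral_mult_right[OF has_integral_exp_minus_to_infinity[of 1 b], of C] by simp
  qed
  finally show ?thesis .
qed

lemma integral_atLeastAtMost_tendsto_exp_dominated:
  fixes h :: "real \<Rightarrow> real"
  assumes "continuous_on {0..} h" and "\<And>r. r \<ge> 0 \<Longrightarrow> \<bar>h r\<bar> \<le> C * exp (-r)"
  shows "(\<lambda>n. integral {0..real n} h) \<longlonglongrightarrow> integral {0..} h"
proof -
  have "(\<lambda>n. C * exp (- real n)) \<longlonglongrightarrow> 0" by real_asymp
  then have "(\<lambda>n. integral {0..real n} h - integral {0..} h) \<longlonglongrightarrow> 0"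
    by (rule Lim_null_comparison[rotated])
       (use exp_dominated_tail_bound[OF assms] in \<open>auto simp: abs_minus_commute\<close>)
  then show ?thesis by (simp add: LIM_zero_iff)
qed

lemma integral_atLeastAtMost_tendsto_nonneg:
  fixes h :: "real \<Rightarrow> real" and b :: "nat \<Rightarrow> real"
  assumes "(h has_integral I) {0..}" and "\<And>t. t \<ge> 0 \<Longrightarrow> h t \<ge> 0"
    and "\<And>n. h integrable_on {0..b n}" and b: "filterlim b at_top sequentially"
  shows "(\<lambda>n. integral {0..b n} h) \<longlonglongrightarrow> I"
proof -
  define g where "g n t = (if t \<in> {0..b n} then h t else 0)" for n t
  have g_int: "integral {0..} (g n) = integral {0..b n} h" for n
    unfolding g_def integral_restrict_Int by (simp add: Int_absorb2 Icc_subset_Ici_iff)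
  have "(\<lambda>n. integral {0..} (g n)) \<longlonglongrightarrow> integral {0..} h"
  proof (rule dominated_convergence(2))
    show "g n integrable_on {0..}" for n
      using assms(3)[of n] unfolding g_def integrable_restrict_Int by (simp add: Int_absorb2)
    show "h integrable_on {0..}" using assms(1) by blast
    show "norm (g n t) \<le> h t" if "t \<in> {0..}" for n t
      using assms(2) that by (auto simp: g_def)
    show "(\<lambda>n. g n t) \<longlonglongrightarrow> h t" if "t \<in> {0..}" for t
    proof (rule Lim_transform_eventually[OF tendsto_const])
      have "\<forall>\<^sub>F n in sequentially. t \<le> b n" using b by (simp add: filterlim_at_top)
      then show "\<forall>\<^sub>F n in sequentially. h t = g n t"
        by (rule eventually_mono) (use that in \<open>auto simp: g_def\<close>)
    qed
  qed
  then show ?thesis using assms(1) by (simp add: g_int integral_unique)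
qed

lemma has_real_derivative_uniform_limit:
  fixes f f' :: "nat \<Rightarrow> real \<Rightarrow> real" and g g' :: "real \<Rightarrow> real" and e :: "nat \<Rightarrow> real"
  assumes "open S" "convex S" "x0 \<in> S"
    and deriv: "\<And>n x. x \<in> S \<Longrightarrow> (f n has_real_derivative f' n x) (at x)"
    and lim: "\<And>x. x \<in> S \<Longrightarrow> (\<lambda>n. f n x) \<longlonglongrightarrow> g x"
    and unif: "\<And>n x. x \<in> S \<Longrightarrow> \<bar>f' n x - g' x\<bar> \<le> e n" and e: "e \<longlonglongrightarrow> 0"
  shows "(g has_real_derivative g' x0) (at x0)"
proof -
  have "\<exists>h. \<forall>x\<in>S. (\<lambda>n. f n x) \<longlonglongrightarrow> h x \<and> (h has_derivative (\<lambda>d. d * g' x)) (at x within S)"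
  proof (rule has_derivative_sequence[of S f "\<lambda>n x d. d * f' n x" "\<lambda>x d. d * g' x" x0 "g x0"])
    show "convex S" "x0 \<in> S" "(\<lambda>n. f n x0) \<longlonglongrightarrow> g x0" by (fact | rule lim)+
    show "(f n has_derivative (\<lambda>d. d * f' n x)) (at x within S)" if "x \<in> S" for n x
      using has_field_derivative_at_within[OF deriv[OF that]]
      by (simp add: has_field_derivative_def mult.commute[of _ "f' n x"])
    fix \<epsilon> :: real assume "\<epsilon> > 0"
    with e have "\<forall>\<^sub>F n in sequentially. e n < \<epsilon>" by (simp add: order_tendstoD(2))
    then show "\<forall>\<^sub>F n in sequentially. \<forall>x\<in>S. \<forall>d. norm (d * f' n x - d * g' x) \<le> \<epsilon> * norm d"
    proof (rule eventually_mono, intro ballI allI)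
      fix n x d assume "e n < \<epsilon>" "x \<in> S"
      then have "\<bar>d\<bar> * \<bar>f' n x - g' x\<bar> \<le> \<bar>d\<bar> * \<epsilon>"
        using unif[of x n] by (intro mult_left_mono) auto
      then show "norm (d * f' n x - d * g' x) \<le> \<epsilon> * norm d"
        by (simp add: abs_mult right_diff_distrib[symmetric] mult.commute)
    qed
  qed
  then obtain h where h: "\<And>x. x \<in> S \<Longrightarrow> (\<lambda>n. f n x) \<longlonglongrightarrow> h x"
    and "(h has_derivative (\<lambda>d. d * g' x0)) (at x0 within S)"
    using \<open>x0 \<in> S\<close> by blast
  then have "(h has_real_derivative g' x0) (at x0)"
    using at_within_open[OF \<open>x0 \<in> S\<close> \<open>open S\<close>]
    by (simp add: has_field_derivative_def mult.commute[of _ "g' x0"])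
  moreover have "h x = g x" if "x \<in> S" for x
    using LIMSEQ_unique[OF h[OF that] lim[OF that]] .
  ultimately show ?thesis
    using has_field_derivative_transform_within_open[of h _ x0 S g] \<open>open S\<close> \<open>x0 \<in> S\<close> by auto
qed

lemma continuous_on_section:
  assumes "continuous_on UNIV (\<lambda>(x, r). F x r)"
  shows "continuous_on A (F x)"
proof -
  have "continuous_on UNIV ((\<lambda>(x, r). F x r) \<circ> Pair x)"
    by (intro continuous_on_compose continuous_intros continuous_on_subset[OF assms]) simp
  then show ?thesis by (auto simp: o_def intro: continuous_on_subset)
qed

lemma has_real_derivative_integral_exp_dominated:
  fixes F F' :: "real \<Rightarrow> real \<Rightarrow> real"
  assumes dF: "\<And>x r. ((\<lambda>x. F x r) has_real_derivative F' x r) (at x)"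
    and cont: "continuous_on UNIV (\<lambda>(x, r). F x r)" "continuous_on UNIV (\<lambda>(x, r). F' x r)"
    and bound: "\<And>R. \<exists>C. \<forall>x r. \<bar>x\<bar> \<le> R \<longrightarrow> r \<ge> 0 \<longrightarrow>
                          \<bar>F x r\<bar> \<le> C * exp (-r) \<and> \<bar>F' x r\<bar> \<le> C * exp (-r)"
  shows "((\<lambda>x. integral {0..} (F x)) has_real_derivative integral {0..} (F' x0)) (at x0)"
proof -
  obtain C where C: "\<And>x r. \<bar>x\<bar> \<le> \<bar>x0\<bar> + 1 \<Longrightarrow> r \<ge> 0 \<Longrightarrow>
                         \<bar>F x r\<bar> \<le> C * exp (-r) \<and> \<bar>F' x r\<bar> \<le> C * exp (-r)"
    using bound[of "\<bar>x0\<bar> + 1"] by blast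
  define S where "S = ball x0 1"
  have xS: "\<bar>x\<bar> \<le> \<bar>x0\<bar> + 1" if "x \<in> S" for x
    using that by (auto simp: S_def dist_real_def)
  have cont_F: "continuous_on A (F x)" and cont_F': "continuous_on A (F' x)" for x A
    using continuous_on_section[OF cont(1)] continuous_on_section[OF cont(2)] .
  show ?thesis
  proof (rule has_real_derivative_uniform_limit[where S = S and e = "\<lambda>n. C * exp (- real n)"
        and f = "\<lambda>n x. integral {0..real n} (F x)" and f' = "\<lambda>n x. integral {0..real n} (F' x)"])
    show "open S" "convex S" "x0 \<in> S" by (simp_all add: S_def)
    show "((\<lambda>x. integral {0..real n} (F x)) has_real_derivative integral {0..real n} (F' x)) (at x)"
      if "x \<in> S" for n x
    proof -
      have "((\<lambda>x. integral (cbox 0 (real n)) (F x)) has_real_derivative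
              integral (cbox 0 (real n)) (F' x)) (at x within S)"
        by (rule leibniz_rule_field_derivative[OF _ _ _ that])
           (auto intro: has_field_derivative_at_within dF integrable_continuous_interval cont_F
              continuous_on_subset[OF cont(2)] simp: S_def)
      then show ?thesis using at_within_open[OF that] by (simp add: S_def)
    qed
    show "(\<lambda>n. integral {0..real n} (F x)) \<longlonglongrightarrow> integral {0..} (F x)" if "x \<in> S" for x
      using C[OF xS[OF that]] by (intro integral_atLeastAtMost_tendsto_exp_dominated cont_F) auto
    show "\<bar>integral {0..real n} (F' x) - integral {0..} (F' x)\<bar> \<le> C * exp (- real n)" if "x \<in> S" for n x
    proof -
      have "\<bar>integral {0..} (F' x) - integral {0..real n} (F' x)\<bar> \<le> C * exp (- real n)"
        using C[OF xS[OF that]] by (intro exp_dominated_tail_bound cont_F') auto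
      then show ?thesis by (simp add: abs_minus_commute)
    qed
    show "(\<lambda>n. C * exp (- real n)) \<longlonglongrightarrow> 0" by real_asymp
  qed
qed

lemma power_le_fact_mult_exp: "r \<ge> 0 \<Longrightarrow> r ^ k \<le> fact k * exp (r::real)"
proof -
  assume "r \<ge> 0"
  then have "(\<Sum>n\<in>{k}. r ^ n /\<^sub>R fact n) \<le> (\<Sum>n. r ^ n /\<^sub>R fact n)"
    by (intro sum_le_suminf[OF summable_exp_generic]) auto
  then have "r ^ k / fact k \<le> exp r" by (simp add: exp_def divide_inverse mult.commute)
  then show ?thesis by (simp add: divide_le_eq mult.commute)
qed

lemma linear_minus_cube_le:
  fixes K r :: real
  assumes "K \<ge> 1" "r \<ge> 0"
  shows "K * r - r^3/3 \<le> 3 * K\<^sup>2"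
proof (cases "r \<le> 3*K")
  case True
  then have "K * r \<le> K * (3*K)" using assms by (intro mult_left_mono) auto
  then have "K * r \<le> 3 * K\<^sup>2" by (simp add: power2_eq_square)
  moreover have "r^3/3 \<ge> 0" using assms by simp
  ultimately show ?thesis by linarith
next
  case False
  then have "r \<ge> 1" using assms by linarith
  then have "r * 1 \<le> r * r" by (intro mult_left_mono) auto
  then have "3*K \<le> r * r" using False by linarith
  then have "r * (3*K) \<le> r * (r * r)" using assms by (intro mult_left_mono) auto
  then have "K * r \<le> r^3/3" by (simp add: power3_eq_cube algebra_simps)
  moreover have "3 * K\<^sup>2 \<ge> 0" by simp
  ultimately show ?thesis by linarith
qed

text \<open>Substituting \<open>t = r exp (\<plusminus>i\<pi>/3)\<close> in the Airy integral \<open>Ai x = (1/(2\<pi>i)) \<integral> exp (t^3/3 - x t) dt\<close>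
  along the rays \<open>arg t = \<plusminus>\<pi>/3\<close> gives \<open>Ai x = (1/\<pi>) \<integral>\<^sub>0\<^sup>\<infinity> airy_kernel 0 (\<pi>/3) x r dr\<close>; the other
  kernels arise from differentiating in \<open>x\<close>.\<close>
definition airy_kernel :: "nat \<Rightarrow> real \<Rightarrow> real \<Rightarrow> real \<Rightarrow> real" where
  "airy_kernel k \<phi> x r = r ^ k * exp (- (r^3/3) - x * r / 2) * sin (\<phi> - sqrt 3 / 2 * x * r)"

definition airy_moment :: "nat \<Rightarrow> real \<Rightarrow> real \<Rightarrow> real" where
  "airy_moment k \<phi> x = integral {0..} (airy_kernel k \<phi> x)"

lemma abs_airy_kernel_le:
  assumes "\<bar>x\<bar> \<le> R" "r \<ge> 0"
  shows "\<bar>airy_kernel k \<phi> x r\<bar> \<le> fact k * exp (3 * (\<bar>R\<bar> + 2)\<^sup>2) * exp (-r)"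
proof -
  have "- x * r \<le> \<bar>R\<bar> * r" using assms by (intro mult_right_mono) auto
  moreover have "0 \<le> \<bar>R\<bar> * r" using assms by simp
  ultimately have "- (r^3/3) - x * r / 2 \<le> - (r^3/3) + \<bar>R\<bar> * r" by linarith
  then have "exp (- (r^3/3) - x * r / 2) \<le> exp (- (r^3/3) + \<bar>R\<bar> * r)" by simp
  have "\<bar>airy_kernel k \<phi> x r\<bar> \<le> r ^ k * exp (- (r^3/3) - x * r / 2)"
    using assms by (simp add: airy_kernel_def abs_mult mult_left_le)
  also have "\<dots> \<le> (fact k * exp r) * exp (- (r^3/3) + \<bar>R\<bar> * r)"
    using power_le_fact_mult_exp[OF assms(2), of k] \<open>exp _ \<le> exp _\<close> by (intro mult_mono) auto
  also have "\<dots> = fact k * exp ((\<bar>R\<bar> + 2) * r - r^3/3) * exp (-r)"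
    by (simp add: algebra_simps flip: exp_add)
  also have "\<dots> \<le> fact k * exp (3 * (\<bar>R\<bar> + 2)\<^sup>2) * exp (-r)"
    using linear_minus_cube_le[of "\<bar>R\<bar> + 2" r] assms(2) by (intro mult_right_mono mult_left_mono) auto
  finally show ?thesis .
qed

lemma airy_kernel_exp_dominated:
  "\<exists>C. \<forall>x r. \<bar>x\<bar> \<le> R \<longrightarrow> r \<ge> 0 \<longrightarrow>
     \<bar>airy_kernel k \<phi> x r\<bar> \<le> C * exp (-r) \<and> \<bar>airy_kernel (Suc k) \<psi> x r\<bar> \<le> C * exp (-r)"
proof (intro exI allI impI conjI)
  fix x r :: real assume "\<bar>x\<bar> \<le> R" "r \<ge> 0"
  have "fact k * exp (3 * (\<bar>R\<bar> + 2)\<^sup>2) * exp (-r) \<le> fact (Suc k) * exp (3 * (\<bar>R\<bar> + 2)\<^sup>2) * exp (-r)"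
    by (intro mult_right_mono fact_mono) auto
  with abs_airy_kernel_le[OF \<open>\<bar>x\<bar> \<le> R\<close> \<open>r \<ge> 0\<close>, of k \<phi>]
  show "\<bar>airy_kernel k \<phi> x r\<bar> \<le> fact (Suc k) * exp (3 * (\<bar>R\<bar> + 2)\<^sup>2) * exp (-r)"
    by linarith
  show "\<bar>airy_kernel (Suc k) \<psi> x r\<bar> \<le> fact (Suc k) * exp (3 * (\<bar>R\<bar> + 2)\<^sup>2) * exp (-r)"
    by (rule abs_airy_kernel_le[OF \<open>\<bar>x\<bar> \<le> R\<close> \<open>r \<ge> 0\<close>])
qed

lemma continuous_on_airy_kernel: "continuous_on A (airy_kernel k \<phi> x)"
  unfolding airy_kernel_def by (intro continuous_intros) auto

lemma continuous_on_airy_kernel_uncurried: "continuous_on A (\<lambda>(x, r). airy_kernel k \<phi> x r)"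
  unfolding airy_kernel_def split_beta' by (intro continuous_intros) auto

lemma airy_kernel_integrable_on: "airy_kernel k \<phi> x integrable_on {0..}"
  using abs_airy_kernel_le[of x "\<bar>x\<bar>"]
  by (intro exp_dominated_integrable_on continuous_on_airy_kernel) auto

lemma has_real_derivative_airy_kernel:
  "((\<lambda>x. airy_kernel k \<phi> x r) has_real_derivative - airy_kernel (Suc k) (\<phi> + pi/3) x r) (at x)"
proof -
  have "sin (\<phi> + pi/3 - sqrt 3 / 2 * x * r)
      = sin (\<phi> - sqrt 3 / 2 * x * r) / 2 + sqrt 3 / 2 * cos (\<phi> - sqrt 3 / 2 * x * r)"
    using sin_add[of "\<phi> - sqrt 3 / 2 * x * r" "pi/3"] by (simp add: sin_60 cos_60 algebra_simps)
  then show ?thesis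
    unfolding airy_kernel_def
    by (auto intro!: derivative_eq_intros simp: algebra_simps)
qed

lemma has_real_derivative_airy_moment:
  "(airy_moment k \<phi> has_real_derivative - airy_moment (Suc k) (\<phi> + pi/3) x) (at x)"
proof -
  have "((\<lambda>x. integral {0..} (airy_kernel k \<phi> x)) has_real_derivative
          integral {0..} (\<lambda>r. - airy_kernel (Suc k) (\<phi> + pi/3) x r)) (at x)"
  proof (rule has_real_derivative_integral_exp_dominated
      [where F = "airy_kernel k \<phi>" and F' = "\<lambda>x r. - airy_kernel (Suc k) (\<phi> + pi/3) x r"])
    show "((\<lambda>x. airy_kernel k \<phi> x r) has_real_derivative - airy_kernel (Suc k) (\<phi> + pi/3) x r) (at x)"
      for x r by (rule has_real_derivative_airy_kernel)
    show "continuous_on UNIV (\<lambda>(x, r). airy_kernel k \<phi> x r)"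
      by (rule continuous_on_airy_kernel_uncurried)
    show "continuous_on UNIV (\<lambda>(x, r). - airy_kernel (Suc k) (\<phi> + pi/3) x r)"
      unfolding airy_kernel_def split_beta' by (intro continuous_intros) auto
    show "\<exists>C. \<forall>x r. \<bar>x\<bar> \<le> R \<longrightarrow> r \<ge> 0 \<longrightarrow> \<bar>airy_kernel k \<phi> x r\<bar> \<le> C * exp (-r) \<and>
            \<bar>- airy_kernel (Suc k) (\<phi> + pi/3) x r\<bar> \<le> C * exp (-r)" for R
      using airy_kernel_exp_dominated by simp
  qed
  then show ?thesis unfolding airy_moment_def by (simp add: integral_neg)
qed

lemma integral_derivative_exp_dominated:
  fixes G g :: "real \<Rightarrow> real"
  assumes deriv: "\<And>r. (G has_real_derivative g r) (at r)" and "continuous_on {0..} g"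
    and "\<And>r. r \<ge> 0 \<Longrightarrow> \<bar>g r\<bar> \<le> C * exp (-r)" and G_bound: "\<And>r. r \<ge> 0 \<Longrightarrow> \<bar>G r\<bar> \<le> C * exp (-r)"
  shows "integral {0..} g = - G 0"
proof -
  have "integral {0..real n} g = G (real n) - G 0" for n
    by (intro integral_unique fundamental_theorem_of_calculus)
       (auto intro: has_field_derivative_at_within deriv
         simp: has_real_derivative_iff_has_vector_derivative[symmetric])
  then have "(\<lambda>n. G (real n) - G 0) \<longlonglongrightarrow> integral {0..} g"
    using integral_atLeastAtMost_tendsto_exp_dominated[OF assms(2,3)] by simp
  moreover have "(\<lambda>n. G (real n)) \<longlonglongrightarrow> 0"
  proof (rule Lim_null_comparison)
    show "(\<lambda>n. C * exp (- real n)) \<longlonglongrightarrow> 0" by real_asymp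
  qed (use G_bound in auto)
  then have "(\<lambda>n. G (real n) - G 0) \<longlonglongrightarrow> 0 - G 0" by (intro tendsto_diff tendsto_const)
  ultimately show ?thesis using LIMSEQ_unique by auto
qed

text \<open>The moments satisfy the Airy equation because \<open>\<partial>\<^sub>r airy_kernel 0 0 x r\<close> is the difference
  of the two integrands below.\<close>
lemma airy_moment_2_pi: "airy_moment 2 pi x = x * airy_moment 0 (pi/3) x"
proof -
  define G where "G r = airy_kernel 0 0 x r" for r
  define g where "g r = airy_kernel 2 pi x r - x * airy_kernel 0 (pi/3) x r" for r
  define E where "E = exp (3 * (\<bar>x\<bar> + 2)\<^sup>2)"
  have "integral {0..} g = - G 0"
  proof (rule integral_derivative_exp_dominated[where C = "(2 + \<bar>x\<bar>) * E"])
    show "(G has_real_derivative g r) (at r)" for r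
    proof -
      have sin_eq: "sin (pi/3 - sqrt 3 / 2 * x * r)
          = sqrt 3 / 2 * cos (sqrt 3 / 2 * x * r) - sin (sqrt 3 / 2 * x * r) / 2"
        by (simp add: sin_diff sin_60 cos_60)
      show ?thesis
        unfolding G_def g_def airy_kernel_def sin_eq
        by (auto intro!: derivative_eq_intros simp: algebra_simps power2_eq_square)
    qed
    show "continuous_on {0..} g"
      unfolding g_def by (intro continuous_intros continuous_on_airy_kernel)
    fix r :: real assume "r \<ge> 0"
    then have kernel_bound: "\<bar>airy_kernel k \<phi> x r\<bar> \<le> fact k * E * exp (-r)" for k \<phi>
      using abs_airy_kernel_le[of x "\<bar>x\<bar>" r] by (simp add: E_def)
    have "E * exp (-r) \<le> (2 + \<bar>x\<bar>) * E * exp (-r)" by (simp add: E_def)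
    then show "\<bar>G r\<bar> \<le> (2 + \<bar>x\<bar>) * E * exp (-r)"
      using kernel_bound[of 0 0] by (simp add: G_def)
    have "\<bar>g r\<bar> \<le> \<bar>airy_kernel 2 pi x r\<bar> + \<bar>x\<bar> * \<bar>airy_kernel 0 (pi/3) x r\<bar>"
      unfolding g_def by (metis abs_mult abs_triangle_ineq4)
    also have "\<dots> \<le> 2 * E * exp (-r) + \<bar>x\<bar> * (E * exp (-r))"
      using kernel_bound[of 2 pi] kernel_bound[of 0 "pi/3"] by (intro add_mono mult_left_mono) auto
    finally show "\<bar>g r\<bar> \<le> (2 + \<bar>x\<bar>) * E * exp (-r)" by (simp add: algebra_simps)
  qed
  moreover have "G 0 = 0" by (simp add: G_def airy_kernel_def)
  moreover have "integral {0..} g = airy_moment 2 pi x - x * airy_moment 0 (pi/3) x"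
  proof -
    have "(\<lambda>r. x * airy_kernel 0 (pi/3) x r) integrable_on {0..}"
      using integrable_on_cmult_left[OF airy_kernel_integrable_on, of x] by simp
    then show ?thesis
      unfolding g_def airy_moment_def by (simp add: integral_diff airy_kernel_integrable_on)
  qed
  ultimately show ?thesis by simp
qed

definition Airy_Ai_integral :: "real \<Rightarrow> real" where
  "Airy_Ai_integral x = airy_moment 0 (pi/3) x / pi"

definition Airy_Ai'_integral :: "real \<Rightarrow> real" where
  "Airy_Ai'_integral x = - airy_moment 1 (2*pi/3) x / pi"

lemma airy_solution_Airy_Ai_integral: "airy_solution Airy_Ai_integral Airy_Ai'_integral"
  unfolding airy_solution_def
proof (intro allI conjI)
  have "pi/3 + pi/3 = 2*pi/3" "2*pi/3 + pi/3 = pi" by simp_all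
  then show "(Airy_Ai_integral has_real_derivative Airy_Ai'_integral x) (at x)"
    and "(Airy_Ai'_integral has_real_derivative x * Airy_Ai_integral x) (at x)" for x
    using has_real_derivative_airy_moment[of 0 "pi/3" x] has_real_derivative_airy_moment[of 1 "2*pi/3" x]
    unfolding Airy_Ai_integral_def Airy_Ai'_integral_def
    by (auto intro!: derivative_eq_intros simp: numeral_2_eq_2 airy_moment_2_pi[unfolded numeral_2_eq_2])
qed

lemma cube_powr_one_third: "b \<ge> 0 \<Longrightarrow> (b^3) powr (1/3) = (b::real)"
proof (cases "b = 0")
  case False
  assume "b \<ge> 0"
  with False have "b^3 = b powr 3" by (simp add: powr_realpow)
  with \<open>b \<ge> 0\<close> show ?thesis by (simp only: powr_powr) simp
qed simp

lemma power_exp_cube_substitution: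
  fixes t :: real
  assumes "t \<ge> 0"
  shows "(3*t) powr (-2/3) * (((3*t) powr (1/3)) ^ k * exp (- (((3*t) powr (1/3))^3/3)))
           = 3 powr ((real k - 2) / 3) * (t powr ((real k + 1) / 3 - 1) / exp t)"
proof (cases "t = 0")
  case False
  then have "3*t > 0" using assms by simp
  then have "((3*t) powr (1/3))^3 = 3*t" "((3*t) powr (1/3))^k = (3*t) powr (real k/3)"
    by (simp_all add: powr_power)
  then have "(3*t) powr (-2/3) * (((3*t) powr (1/3)) ^ k * exp (- (((3*t) powr (1/3))^3/3)))
      = (3*t) powr (-2/3) * (3*t) powr (real k/3) * exp (-t)"
    by simp
  also have "\<dots> = (3*t) powr ((real k - 2)/3) * exp (-t)"
    by (simp add: powr_add[symmetric] diff_divide_distrib add.commute)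
  also have "\<dots> = 3 powr ((real k - 2) / 3) * (t powr ((real k + 1) / 3 - 1) / exp t)"
    by (simp add: powr_mult exp_minus field_simps)
  finally show ?thesis .
qed simp

lemma has_integral_power_exp_cube_atLeastAtMost:
  fixes b :: real
  assumes "b \<ge> 0"
  shows "((\<lambda>t. 3 powr ((real k - 2) / 3) * (t powr ((real k + 1) / 3 - 1) / exp t)) has_integral
           integral {0..b} (\<lambda>r. r ^ k * exp (- (r^3/3)))) {0..b^3/3}"
proof -
  define f where "f = (\<lambda>r::real. r ^ k * exp (- (r^3/3)))"
  define g where "g t = (3*t) powr (1/3)" for t :: real
  define g' where "g' t = (3*t) powr (-2/3)" for t :: real
  have g_0: "g 0 = 0" and g_b: "g (b^3/3) = b"
    using cube_powr_one_third[OF assms] by (simp_all add: g_def)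
  have "((\<lambda>t. g' t *\<^sub>R f (g t)) has_integral integral {g 0..g (b^3/3)} f) {0..b^3/3}"
  proof (rule has_integral_substitution_strong[of "{0}" 0 "b^3/3" g 0 b f g'])
    have "g t \<le> g (b^3/3)" if "t \<in> {0..b^3/3}" for t
      unfolding g_def using that by (intro powr_mono2) auto
    then show "g ` {0..b^3/3} \<subseteq> {0..b}" using g_b by (auto simp: g_def)
    show "continuous_on {0..b} f" unfolding f_def by (intro continuous_intros) auto
    show "continuous_on {0..b^3/3} g" unfolding g_def
      by (intro continuous_on_powr' continuous_intros) auto
    fix t assume "t \<in> {0..b^3/3} - {0}"
    then have "3*t > 0" by auto
    from DERIV_chain2[OF has_real_derivative_powr[OF this, of "1/3"] DERIV_cmult_Id[of 3 t]]
    show "(g has_real_derivative g' t) (at t within {0..b^3/3})"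
      unfolding g_def g'_def by (auto intro: has_field_derivative_at_within)
  qed (use assms g_0 g_b in auto)
  then have "((\<lambda>t. g' t * f (g t)) has_integral integral {0..b} f) {0..b^3/3}"
    using g_0 g_b by simp
  then show ?thesis unfolding f_def
    by (rule has_integral_eq[rotated]) (use power_exp_cube_substitution in \<open>auto simp: g_def g'_def\<close>)
qed

lemma integral_power_exp_cube:
  "integral {0..} (\<lambda>r. r ^ k * exp (- (r^3/3))) = 3 powr ((real k - 2) / 3) * Gamma ((real k + 1) / 3)"
proof -
  define c where "c = (3::real) powr ((real k - 2) / 3)"
  define a where "a = (real k + 1) / 3"
  define f where "f = (\<lambda>r::real. r ^ k * exp (- (r^3/3)))"
  have sub: "((\<lambda>t. c * (t powr (a - 1) / exp t)) has_integral integral {0..real n} f) {0..(real n)^3/3}"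
    for n
    using has_integral_power_exp_cube_atLeastAtMost[of "real n" k] by (simp add: c_def a_def f_def)
  have "(\<lambda>n. integral {0..(real n)^3/3} (\<lambda>t. c * (t powr (a - 1) / exp t))) \<longlonglongrightarrow> c * Gamma a"
  proof (rule integral_atLeastAtMost_tendsto_nonneg)
    show "((\<lambda>t. c * (t powr (a - 1) / exp t)) has_integral c * Gamma a) {0..}"
      by (intro has_integral_mult_right Gamma_integral_real) (simp add: a_def)
    show "filterlim (\<lambda>n. (real n)^3/3) at_top sequentially" by real_asymp
  qed (use sub in \<open>auto simp: c_def\<close>)
  moreover have "(\<lambda>n. integral {0..real n} f) \<longlonglongrightarrow> integral {0..} f"
  proof (rule integral_atLeastAtMost_tendsto_exp_dominated)
    show "continuous_on {0..} f" unfolding f_def by (intro continuous_intros) auto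
    show "\<bar>f r\<bar> \<le> fact k * exp (3 * (\<bar>0\<bar> + 2)\<^sup>2) * exp (-r)" if "r \<ge> 0" for r
      using abs_airy_kernel_le[of 0 0 r k "pi/2"] that by (simp add: airy_kernel_def f_def)
  qed
  moreover have "integral {0..(real n)^3/3} (\<lambda>t. c * (t powr (a - 1) / exp t)) = integral {0..real n} f"
    for n using sub[of n] by (rule integral_unique)
  ultimately have "integral {0..} f = c * Gamma a"
    using LIMSEQ_unique by auto
  then show ?thesis by (simp add: f_def c_def a_def)
qed

lemma Gamma_one_third_mult_Gamma_two_thirds: "Gamma (1/3::real) * Gamma (2/3) = 2 * pi / sqrt 3"
proof -
  define z where "z = complex_of_real (1/3)"
  have "Gamma z * Gamma (1 - z) = of_real pi / sin (of_real pi * z)"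
    by (rule Gamma_reflection_complex)
  moreover have "Gamma z = of_real (Gamma (1/3))" unfolding z_def by (rule Gamma_complex_of_real)
  moreover have "Gamma (1 - z) = of_real (Gamma (2/3))"
    using Gamma_complex_of_real[of "2/3"] by (simp add: z_def)
  moreover have "sin (of_real pi * z) = of_real (sin (pi/3))"
  proof -
    have "of_real pi * z = of_real (pi/3)" by (simp add: z_def)
    then show ?thesis by (simp only: sin_of_real)
  qed
  ultimately have "complex_of_real (Gamma (1/3) * Gamma (2/3)) = of_real (pi / sin (pi/3))"
    by simp
  then have "Gamma (1/3::real) * Gamma (2/3) = pi / sin (pi/3)" by (simp only: of_real_eq_iff)
  then show ?thesis by (simp add: sin_60)
qed

lemma Airy_Ai_integral_0: "Airy_Ai_integral 0 = airy_c1"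
proof -
  have "airy_kernel 0 (pi/3) 0 = (\<lambda>r. sqrt 3 / 2 * exp (- (r^3/3)))"
    by (auto simp: airy_kernel_def sin_60)
  then have "Airy_Ai_integral 0 = sqrt 3 / 2 * (3 powr (-2/3) * Gamma (1/3)) / pi"
    using integral_power_exp_cube[of 0]
    by (simp add: Airy_Ai_integral_def airy_moment_def integral_mult_right)
  also have "Gamma (1/3) = 2 * pi / sqrt 3 / Gamma (2/3)"
  proof -
    have "Gamma (2/3::real) > 0" by (rule Gamma_real_pos) simp
    then have "Gamma (2/3::real) \<noteq> 0" by linarith
    then have "Gamma (1/3::real) = Gamma (1/3) * Gamma (2/3) / Gamma (2/3)" by simp
    then show ?thesis by (simp only: Gamma_one_third_mult_Gamma_two_thirds)
  qed
  finally show ?thesis by (simp add: airy_c1_def powr_minus field_simps)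
qed

lemma Airy_Ai'_integral_0: "Airy_Ai'_integral 0 = - airy_c2"
proof -
  have "sin (2*pi/3) = sqrt 3 / 2" using sin_pi_minus[of "pi/3"] by (simp add: sin_60)
  then have "airy_kernel 1 (2*pi/3) 0 = (\<lambda>r. sqrt 3 / 2 * (r ^ 1 * exp (- (r^3/3))))"
    by (auto simp: airy_kernel_def)
  then have "Airy_Ai'_integral 0 = - (sqrt 3 / 2 * (3 powr (-1/3) * Gamma (2/3))) / pi"
    using integral_power_exp_cube[of 1]
    by (simp add: Airy_Ai'_integral_def airy_moment_def integral_mult_right)
  also have "Gamma (2/3) = 2 * pi / sqrt 3 / Gamma (1/3)"
  proof -
    have "Gamma (1/3::real) > 0" by (rule Gamma_real_pos) simp
    then have "Gamma (1/3::real) \<noteq> 0" by linarith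
    then have "Gamma (2/3::real) = Gamma (1/3) * Gamma (2/3) / Gamma (1/3)" by simp
    then show ?thesis by (simp only: Gamma_one_third_mult_Gamma_two_thirds)
  qed
  finally show ?thesis by (simp add: airy_c2_def powr_minus field_simps)
qed

lemma Airy_Ai_eq_Airy_Ai_integral: "Airy_Ai = Airy_Ai_integral"
proof
  fix x
  have "Airy_Ai x - Airy_Ai_integral x = 0"
    by (rule airy_solution_unique(1)[OF airy_solution_diff[OF airy_solution_Airy_Ai
          airy_solution_Airy_Ai_integral], of 0])
       (simp_all add: Airy_Ai_0 Airy_Ai'_0 Airy_Ai_integral_0 Airy_Ai'_integral_0)
  then show "Airy_Ai x = Airy_Ai_integral x" by simp
qed

text \<open>This bound, invisible in the power series, is what the integral representation is for.\<close>
lemma abs_Airy_Ai_le: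
  assumes "x \<ge> 0"
  shows "\<bar>Airy_Ai x\<bar> \<le> airy_moment 0 (pi/2) 0 / pi"
proof -
  have "norm (airy_kernel 0 (pi/3) x r) \<le> airy_kernel 0 (pi/2) 0 r" if "r \<in> {0..}" for r
  proof -
    have "norm (airy_kernel 0 (pi/3) x r) \<le> exp (- (r^3/3) - x * r / 2)"
      by (simp add: airy_kernel_def abs_mult mult_left_le)
    also have "\<dots> \<le> exp (- (r^3/3))" using assms that by simp
    finally show ?thesis by (simp add: airy_kernel_def)
  qed
  then have "norm (airy_moment 0 (pi/3) x) \<le> airy_moment 0 (pi/2) 0"
    unfolding airy_moment_def by (intro integral_norm_bound_integral airy_kernel_integrable_on)
  then show ?thesis
    by (simp add: Airy_Ai_eq_Airy_Ai_integral Airy_Ai_integral_def divide_right_mono)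
qed

section \<open>Sign properties of Ai and its largest zero\<close>

lemma Airy_Ai_pos_of_nonneg: "x \<ge> 0 \<Longrightarrow> Airy_Ai x > 0"
  and Airy_Ai'_neg_of_nonneg: "x \<ge> 0 \<Longrightarrow> Airy_Ai' x < 0"
  using airy_solution_bounded_pos_decreasing[OF airy_solution_Airy_Ai abs_Airy_Ai_le]
    airy_c1_pos airy_c2_pos
  by (simp_all add: Airy_Ai_0 Airy_Ai'_0)

lemma airy_a1_greatest: "Airy_Ai airy_a1 = 0 \<and> (\<forall>x. Airy_Ai x = 0 \<longrightarrow> x \<le> airy_a1) \<and> airy_a1 < 0"
proof -
  define Z where "Z = {x. Airy_Ai x = 0}"
  have "\<exists>s\<in>{-1-pi..-1-pi+pi}. Airy_Ai s = 0"
    by (rule airy_solution_has_zero[OF airy_solution_Airy_Ai]) simp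
  then have "Z \<noteq> {}" by (auto simp: Z_def)
  have neg: "z < 0" if "z \<in> Z" for z
    using that Airy_Ai_pos_of_nonneg[of z] by (force simp: Z_def)
  then have "bdd_above Z" by (meson bdd_above.I less_imp_le)
  have "closed Z"
    unfolding Z_def
    by (rule closed_Collect_eq[OF airy_solution_continuous_on[OF airy_solution_Airy_Ai] continuous_on_const])
  have "Sup Z \<in> Z" by (rule closed_contains_Sup[OF \<open>Z \<noteq> {}\<close> \<open>bdd_above Z\<close> \<open>closed Z\<close>])
  moreover have "y \<le> Sup Z" if "Airy_Ai y = 0" for y
    using that \<open>bdd_above Z\<close> by (auto simp: Z_def intro: cSup_upper)
  ultimately have "airy_a1 = Sup Z"
    unfolding airy_a1_def by (intro Greatest_equality) (auto simp: Z_def)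
  with \<open>Sup Z \<in> Z\<close> \<open>\<And>y. Airy_Ai y = 0 \<Longrightarrow> y \<le> Sup Z\<close> neg show ?thesis by (auto simp: Z_def)
qed

lemma Airy_Ai_airy_a1: "Airy_Ai airy_a1 = 0"
  and airy_a1_neg: "airy_a1 < 0"
  using airy_a1_greatest by auto

lemma Airy_Ai_pos_of_gt_airy_a1:
  assumes "x > airy_a1"
  shows "Airy_Ai x > 0"
proof (cases "x \<ge> 0")
  case True
  then show ?thesis by (rule Airy_Ai_pos_of_nonneg)
next
  case False
  have "Airy_Ai s \<noteq> 0" if "s \<in> {x..0}" for s
    using that assms airy_a1_greatest by force
  with Airy_Ai_pos_of_nonneg[of 0] False show ?thesis
    by (intro pos_if_no_zero[OF airy_solution_continuous_on[OF airy_solution_Airy_Ai], of x 0 0 x]) auto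
qed

lemma Airy_Ai'_airy_a1_neq_0: "Airy_Ai' airy_a1 \<noteq> 0"
proof
  assume "Airy_Ai' airy_a1 = 0"
  then have "Airy_Ai 0 = 0"
    by (rule airy_solution_unique(1)[OF airy_solution_Airy_Ai Airy_Ai_airy_a1])
  then show False using Airy_Ai_pos_of_nonneg[of 0] by simp
qed

lemma Airy_Ai_riccati_of_gt_airy_a1:
  assumes "t > airy_a1"
  shows "t * (Airy_Ai t)\<^sup>2 < (Airy_Ai' t)\<^sup>2"
proof (cases "t \<ge> 0")
  case True
  show ?thesis
    by (rule airy_solution_riccati_bound[OF airy_solution_Airy_Ai _ True])
       (auto intro: Airy_Ai_pos_of_nonneg Airy_Ai'_neg_of_nonneg)
next
  case False
  then have "t * (Airy_Ai t)\<^sup>2 < 0"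
    using Airy_Ai_pos_of_gt_airy_a1[OF assms] by (simp add: mult_neg_pos)
  then show ?thesis by (smt (verit) zero_le_power2)
qed

section \<open>Monotonicity and the limit at 0\<close>

lemma Airy_Ai_has_real_derivative_shift:
  "((\<lambda>s. Airy_Ai (c + s)) has_real_derivative Airy_Ai' (c + s)) (at s)"
  using DERIV_chain2[OF Airy_Ai_has_real_derivative DERIV_add[OF DERIV_const DERIV_ident]] by simp

lemma Airy_Ai'_has_real_derivative_shift:
  "((\<lambda>s. Airy_Ai' (c + s)) has_real_derivative (c + s) * Airy_Ai (c + s)) (at s)"
  using DERIV_chain2[OF Airy_Ai'_has_real_derivative DERIV_add[OF DERIV_const DERIV_ident]] by simp

lemma Airy_Ai'_div_Airy_Ai_decreasing:
  assumes "0 < x" "x < y"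
  shows "Airy_Ai' (airy_a1 + y) / Airy_Ai (airy_a1 + y) < Airy_Ai' (airy_a1 + x) / Airy_Ai (airy_a1 + x)"
proof (rule DERIV_neg_imp_decreasing[OF assms(2)])
  fix s assume "x \<le> s" "s \<le> y"
  define t where "t = airy_a1 + s"
  have "t > airy_a1" using \<open>x \<le> s\<close> assms by (simp add: t_def)
  then have "Airy_Ai t > 0" by (rule Airy_Ai_pos_of_gt_airy_a1)
  then have "((\<lambda>s. Airy_Ai' (airy_a1 + s) / Airy_Ai (airy_a1 + s)) has_real_derivative
      (t * Airy_Ai t * Airy_Ai t - Airy_Ai' t * Airy_Ai' t) / (Airy_Ai t * Airy_Ai t)) (at s)"
    unfolding t_def
    by (intro DERIV_divide Airy_Ai_has_real_derivative_shift Airy_Ai'_has_real_derivative_shift) simp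
  moreover have "(t * Airy_Ai t * Airy_Ai t - Airy_Ai' t * Airy_Ai' t) / (Airy_Ai t * Airy_Ai t) < 0"
    using Airy_Ai_riccati_of_gt_airy_a1[OF \<open>t > airy_a1\<close>] \<open>Airy_Ai t > 0\<close>
    by (simp add: power2_eq_square divide_neg_pos)
  ultimately show "\<exists>d. ((\<lambda>s. Airy_Ai' (airy_a1 + s) / Airy_Ai (airy_a1 + s)) has_real_derivative d) (at s)
                   \<and> d < 0" by blast
qed

text \<open>For \<open>\<Phi>(s) = s Ai'(a\<^sub>1 + s) / Ai(a\<^sub>1 + s)\<close> one has \<open>\<Phi>'(s) = airy_Phi_numerator s / Ai(a\<^sub>1 + s)\<^sup>2\<close>.\<close>
definition airy_Phi_numerator :: "real \<Rightarrow> real" where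
  "airy_Phi_numerator s = s * (airy_a1 + s) * (Airy_Ai (airy_a1 + s))\<^sup>2
     + Airy_Ai (airy_a1 + s) * Airy_Ai' (airy_a1 + s) - s * (Airy_Ai' (airy_a1 + s))\<^sup>2"

lemma has_real_derivative_airy_Phi_numerator:
  "(airy_Phi_numerator has_real_derivative (Airy_Ai (airy_a1 + s))\<^sup>2 * (2 * airy_a1 + 3 * s)) (at s)"
  unfolding airy_Phi_numerator_def
  by (rule derivative_eq_intros Airy_Ai_has_real_derivative_shift Airy_Ai'_has_real_derivative_shift
      refl)+ (simp add: power2_eq_square algebra_simps)

lemma airy_Phi_numerator_0: "airy_Phi_numerator 0 = 0"
  by (simp add: airy_Phi_numerator_def Airy_Ai_airy_a1)

lemma airy_Phi_numerator_neg_of_nonneg: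
  assumes "s > 0" "airy_a1 + s \<ge> 0"
  shows "airy_Phi_numerator s < 0"
proof -
  define t where "t = airy_a1 + s"
  have "s * (t * (Airy_Ai t)\<^sup>2 - (Airy_Ai' t)\<^sup>2) < 0"
    using Airy_Ai_riccati_of_gt_airy_a1[of t] airy_a1_neg assms by (simp add: t_def mult_pos_neg)
  moreover have "Airy_Ai t * Airy_Ai' t < 0"
    using Airy_Ai_pos_of_nonneg Airy_Ai'_neg_of_nonneg assms(2) by (simp add: t_def mult_pos_neg)
  ultimately show ?thesis by (simp add: airy_Phi_numerator_def t_def algebra_simps)
qed

text \<open>The numerator starts at \<open>0\<close>, decreases until \<open>s = -2a\<^sub>1/3\<close> and then increases, but is
  still negative at \<open>s = -a\<^sub>1\<close>, where \<open>a\<^sub>1 + s\<close> becomes nonnegative.\<close>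
lemma airy_Phi_numerator_neg:
  assumes "s > 0"
  shows "airy_Phi_numerator s < 0"
proof -
  let ?d = "\<lambda>z. (Airy_Ai (airy_a1 + z))\<^sup>2 * (2 * airy_a1 + 3 * z)"
  have pos: "Airy_Ai (airy_a1 + z) > 0" if "z > 0" for z
    using that by (intro Airy_Ai_pos_of_gt_airy_a1) simp
  consider "airy_a1 + s \<ge> 0" | "3 * s \<le> - 2 * airy_a1" | "- 2 * airy_a1 < 3 * s" "s < - airy_a1"
    by linarith
  then show ?thesis
  proof cases
    case 1
    then show ?thesis by (rule airy_Phi_numerator_neg_of_nonneg[OF assms])
  next
    case 2
    obtain z where z: "0 < z" "z < s" "airy_Phi_numerator s - airy_Phi_numerator 0 = (s - 0) * ?d z"
      using MVT2[OF assms, of airy_Phi_numerator ?d] has_real_derivative_airy_Phi_numerator by blast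
    have "?d z < 0" using pos[OF \<open>0 < z\<close>] z 2 by (intro mult_pos_neg) auto
    with z assms show ?thesis by (simp add: airy_Phi_numerator_0 mult_pos_neg)
  next
    case 3
    obtain z where z: "s < z" "z < - airy_a1"
      "airy_Phi_numerator (- airy_a1) - airy_Phi_numerator s = (- airy_a1 - s) * ?d z"
      using MVT2[OF \<open>s < - airy_a1\<close>, of airy_Phi_numerator ?d] has_real_derivative_airy_Phi_numerator
      by blast
    have "?d z > 0" using pos[of z] z 3 assms by simp
    moreover have "- airy_a1 - s > 0" using 3 by simp
    ultimately have "(- airy_a1 - s) * ?d z > 0" by simp
    with z have "airy_Phi_numerator s < airy_Phi_numerator (- airy_a1)" by linarith
    also have "\<dots> < 0" using airy_a1_neg by (intro airy_Phi_numerator_neg_of_nonneg) auto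
    finally show ?thesis .
  qed
qed

lemma airy_Phi_decreasing:
  assumes "0 < x" "x < y"
  shows "y * Airy_Ai' (airy_a1 + y) / Airy_Ai (airy_a1 + y) < x * Airy_Ai' (airy_a1 + x) / Airy_Ai (airy_a1 + x)"
proof (rule DERIV_neg_imp_decreasing[OF assms(2)])
  fix s assume "x \<le> s" "s \<le> y"
  then have "s > 0" using assms by simp
  then have "Airy_Ai (airy_a1 + s) > 0" by (intro Airy_Ai_pos_of_gt_airy_a1) simp
  define t where "t = airy_a1 + s"
  have "((\<lambda>s. s * Airy_Ai' (airy_a1 + s) / Airy_Ai (airy_a1 + s)) has_real_derivative
      ((s * (t * Airy_Ai t) + 1 * Airy_Ai' t) * Airy_Ai t - s * Airy_Ai' t * Airy_Ai' t)
        / (Airy_Ai t * Airy_Ai t)) (at s)"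
    unfolding t_def using \<open>Airy_Ai (airy_a1 + s) > 0\<close>
    by (intro DERIV_divide DERIV_mult' DERIV_ident Airy_Ai_has_real_derivative_shift
        Airy_Ai'_has_real_derivative_shift) simp
  moreover have "((s * (t * Airy_Ai t) + 1 * Airy_Ai' t) * Airy_Ai t - s * Airy_Ai' t * Airy_Ai' t)
        / (Airy_Ai t * Airy_Ai t) = airy_Phi_numerator s / (Airy_Ai (airy_a1 + s))\<^sup>2"
    by (simp add: airy_Phi_numerator_def t_def power2_eq_square algebra_simps)
  ultimately have "((\<lambda>s. s * Airy_Ai' (airy_a1 + s) / Airy_Ai (airy_a1 + s)) has_real_derivative
      airy_Phi_numerator s / (Airy_Ai (airy_a1 + s))\<^sup>2) (at s)" by simp
  moreover have "airy_Phi_numerator s / (Airy_Ai (airy_a1 + s))\<^sup>2 < 0"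
    using airy_Phi_numerator_neg[OF \<open>s > 0\<close>] \<open>Airy_Ai (airy_a1 + s) > 0\<close> by (simp add: divide_neg_pos)
  ultimately show "\<exists>d. ((\<lambda>s. s * Airy_Ai' (airy_a1 + s) / Airy_Ai (airy_a1 + s)) has_real_derivative d)
                   (at s) \<and> d < 0" by blast
qed

lemma airy_Phi_tendsto_1:
  "((\<lambda>x. x * Airy_Ai' (airy_a1 + x) / Airy_Ai (airy_a1 + x)) \<longlongrightarrow> 1) (at_right 0)"
proof -
  have "((\<lambda>h. Airy_Ai (airy_a1 + h) / h) \<longlongrightarrow> Airy_Ai' airy_a1) (at 0)"
    using Airy_Ai_has_real_derivative[of airy_a1] by (simp add: DERIV_def Airy_Ai_airy_a1)
  moreover have "((\<lambda>h. Airy_Ai' (airy_a1 + h)) \<longlongrightarrow> Airy_Ai' airy_a1) (at 0)"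
    using DERIV_isCont[OF Airy_Ai'_has_real_derivative_shift[of airy_a1 0]]
    by (simp add: isCont_def)
  ultimately have "((\<lambda>h. Airy_Ai' (airy_a1 + h) / (Airy_Ai (airy_a1 + h) / h)) \<longlongrightarrow> 1) (at 0)"
    using tendsto_divide[OF _ _ Airy_Ai'_airy_a1_neq_0] Airy_Ai'_airy_a1_neq_0 by fastforce
  then have "((\<lambda>h. h * Airy_Ai' (airy_a1 + h) / Airy_Ai (airy_a1 + h)) \<longlongrightarrow> 1) (at 0)"
    by (rule Lim_transform_eventually) (simp add: eventually_at_filter)
  then show ?thesis by (rule tendsto_mono[OF at_within_le_at])
qed

section \<open>Smoothness\<close>

lemma has_real_derivative_Re_holomorphic:
  fixes F :: "complex \<Rightarrow> complex" and f :: "real \<Rightarrow> real"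
  assumes T: "open T" and F: "F holomorphic_on T"
    and f: "\<And>x. of_real x \<in> T \<Longrightarrow> f x = Re (F (of_real x))" and x: "of_real x \<in> T"
  shows "(f has_real_derivative Re (deriv F (of_real x))) (at x)"
proof -
  have "(F has_field_derivative deriv F (of_real x)) (at (of_real x))"
    by (rule holomorphic_derivI[OF F T x])
  from bounded_linear.has_vector_derivative[OF bounded_linear_Re has_vector_derivative_real_field[OF this]]
  have "((\<lambda>t. Re (F (of_real t))) has_real_derivative Re (deriv F (of_real x))) (at x)"
    by (simp add: has_real_derivative_iff_has_vector_derivative)
  moreover have "open (of_real -` T :: real set)"
    by (intro open_vimage T continuous_intros)
  ultimately show ?thesis
    using has_field_derivative_transform_within_open[of "\<lambda>t. Re (F (of_real t))" _ x "of_real -` T" f]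
      x f by auto
qed

lemma higher_deriv_Re_holomorphic:
  fixes F :: "complex \<Rightarrow> complex" and f :: "real \<Rightarrow> real"
  assumes T: "open T" and F: "F holomorphic_on T"
    and f: "\<And>x. of_real x \<in> T \<Longrightarrow> f x = Re (F (of_real x))"
  shows "of_real x \<in> T \<Longrightarrow> (deriv ^^ n) f x = Re ((deriv ^^ n) F (of_real x))"
proof (induction n arbitrary: x)
  case 0
  then show ?case using f by simp
next
  case (Suc n)
  have "((deriv ^^ n) f has_real_derivative Re (deriv ((deriv ^^ n) F) (of_real x))) (at x)"
    by (rule has_real_derivative_Re_holomorphic[OF T holomorphic_higher_deriv[OF F T] Suc.IH Suc.prems])
  then show ?case by (simp add: DERIV_imp_deriv)
qed

lemma higher_deriv_differentiable_Re_holomorphic: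
  fixes F :: "complex \<Rightarrow> complex" and f :: "real \<Rightarrow> real"
  assumes T: "open T" and F: "F holomorphic_on T"
    and f: "\<And>x. of_real x \<in> T \<Longrightarrow> f x = Re (F (of_real x))" and x: "of_real x \<in> T"
  shows "((deriv ^^ n) f) differentiable (at x)"
  using has_real_derivative_Re_holomorphic[OF T holomorphic_higher_deriv[OF F T]
      higher_deriv_Re_holomorphic[OF T F f] x]
  by (auto simp: real_differentiable_def)

lemma airy_series_shift_holomorphic:
  "(\<lambda>z. airy_series (c + z) :: complex) holomorphic_on A"
  "(\<lambda>z. airy_series' (c + z) :: complex) holomorphic_on A"
  unfolding holomorphic_on_def field_differentiable_def
  using DERIV_chain2[OF airy_series_has_field_derivative DERIV_add[OF DERIV_const DERIV_ident]]
    DERIV_chain2[OF airy_series'_has_field_derivative DERIV_add[OF DERIV_const DERIV_ident]]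
  by blast+

text \<open>Away from the complex zeros of \<open>z \<mapsto> Ai(a\<^sub>1 + z)\<close>, \<open>\<Phi>\<close> and \<open>\<Psi>\<close> are restrictions of holomorphic
  functions.\<close>
definition airy_shift_nonzero :: "complex set" where
  "airy_shift_nonzero = {z. airy_series (of_real airy_a1 + z) \<noteq> 0}"

lemma open_airy_shift_nonzero: "open airy_shift_nonzero"
  unfolding airy_shift_nonzero_def
  by (intro open_Collect_neq holomorphic_on_imp_continuous_on[OF airy_series_shift_holomorphic(1)]
      continuous_on_const)

lemma of_real_in_airy_shift_nonzero: "x > 0 \<Longrightarrow> of_real x \<in> airy_shift_nonzero"
  using Airy_Ai_pos_of_gt_airy_a1[of "airy_a1 + x"]
  by (simp add: airy_shift_nonzero_def airy_series_of_real flip: of_real_add)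

lemma airy_Psi_smooth:
  assumes "x > 0"
  shows "((deriv ^^ n) (\<lambda>x. Airy_Ai' (airy_a1 + x) / Airy_Ai (airy_a1 + x))) differentiable (at x)"
proof (rule higher_deriv_differentiable_Re_holomorphic[OF open_airy_shift_nonzero _ _
      of_real_in_airy_shift_nonzero[OF assms]])
  show "(\<lambda>z. airy_series' (of_real airy_a1 + z) / airy_series (of_real airy_a1 + z)) holomorphic_on
        airy_shift_nonzero"
    by (intro holomorphic_intros airy_series_shift_holomorphic) (auto simp: airy_shift_nonzero_def)
qed (simp flip: of_real_add add: airy_series_of_real airy_series'_of_real flip: of_real_divide)

lemma airy_Phi_smooth:
  assumes "x > 0"
  shows "((deriv ^^ n) (\<lambda>x. x * Airy_Ai' (airy_a1 + x) / Airy_Ai (airy_a1 + x))) differentiable (at x)"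
proof (rule higher_deriv_differentiable_Re_holomorphic[OF open_airy_shift_nonzero _ _
      of_real_in_airy_shift_nonzero[OF assms]])
  show "(\<lambda>z. z * airy_series' (of_real airy_a1 + z) / airy_series (of_real airy_a1 + z)) holomorphic_on
        airy_shift_nonzero"
    by (intro holomorphic_intros airy_series_shift_holomorphic) (auto simp: airy_shift_nonzero_def)
qed (simp flip: of_real_add add: airy_series_of_real airy_series'_of_real flip: of_real_divide of_real_mult)

theorem lemma4p1:
  fixes \<Phi> \<Psi> :: "real \<Rightarrow> real"
  defines "\<Phi> \<equiv> (\<lambda>x. x * deriv Airy_Ai (airy_a1 + x) / Airy_Ai (airy_a1 + x))"
      and "\<Psi> \<equiv> (\<lambda>x. deriv Airy_Ai (airy_a1 + x) / Airy_Ai (airy_a1 + x))"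
  shows "(\<forall>n. \<forall>x>0. ((deriv ^^ n) \<Phi>) differentiable (at x))
       \<and> (\<forall>n. \<forall>x>0. ((deriv ^^ n) \<Psi>) differentiable (at x))
       \<and> (\<forall>x y. 0 < x \<longrightarrow> x < y \<longrightarrow> \<Phi> y < \<Phi> x)
       \<and> (\<forall>x y. 0 < x \<longrightarrow> x < y \<longrightarrow> \<Psi> y < \<Psi> x)
       \<and> (\<Phi> \<longlongrightarrow> 1) (at_right 0)"
  unfolding \<Phi>_def \<Psi>_def deriv_Airy_Ai
  using airy_Phi_smooth airy_Psi_smooth airy_Phi_decreasing Airy_Ai'_div_Airy_Ai_decreasing
    airy_Phi_tendsto_1
  by blast

end
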